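(* Let $q>2$ be a prime power and consider the 2-user broadcast channel over $\mathbb F_q$ with inputs $X_1,X_2\in\mathbb F_q$, in which at each channel use a coefficient $G$ uniform on $\mathbb F_q^\times$ is drawn, independent of the inputs and i.i.d. across uses, Rx-1 observes $\overline Y_1=(X_1,X_2)$ and Rx-2 observes $\overline Y_2=(GX_1+X_2,\,G)$ (a physically degraded and semi-deterministic BC). Then $$\max\{R_2:(\log_2 q,R_2)\in\mathcal C^{\mathrm{NS}}\}=\log_2 q,\qquad \max\{R_2:(\log_2 q,R_2)\in\mathcal C\}=\tfrac12\log_2 q,$$ where $\mathcal C^{\mathrm{NS}}$ and $\mathcal C$ are the capacity regions of this channel with and without NS-assistance.
   Context: Coding framework: messages $W_1,W_2$ independent and uniform on finite sets $\mathcal M_1,\mathcal M_2$; the transmitter controls $(X_1,X_2)$. Classical scheme: stochastic encoder from messages to the $n$ channel inputs and stochastic decoders $\hat W_k=\psi_k(\overline Y_k^{[n]})$. A $\kappa$-partite NS box is a conditional pmf of outputs given inputs (finite output alphabets) such that for every subset of parties the marginal of their outputs depends only on their inputs. NS-assisted scheme: a 3-partite NS box where the transmitter inputs $(W_1,W_2)$ and obtains the channel input sequence as output, and Rx-$k$ inputs $\overline Y_k^{[n]}$ and obtains $\hat W_k$; joint law = $\frac{1}{|\mathcal M_1||\mathcal M_2|}\times$ box distribution $\times$ channel law. Rate pairs are achievable if there is a sequence of schemes with vanishing $\max_k\Pr(\hat W_k\ne W_k)$ and $\lim_n\frac1n\log_2|\mathcal M_k^{(n)}|\ge R_k$; capacity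 region = closure of achievable pairs. *)

theory Defs
  imports "HOL-Analysis.Analysis"
begin

text \<open>A single-use channel law: W x y1 y2 = probability that Rx-1 observes y1 and
  Rx-2 observes y2 when the transmitter sends x (x is the input pair (X1,X2)).\<close>
type_synonym ('x,'y1,'y2) chan = "'x \<Rightarrow> 'y1 \<Rightarrow> 'y2 \<Rightarrow> real"

definition seqs :: "nat \<Rightarrow> 'a list set" where
  "seqs n = {xs. length xs = n}"

definition chan_n :: "('x,'y1,'y2) chan \<Rightarrow> 'x list \<Rightarrow> 'y1 list \<Rightarrow> 'y2 list \<Rightarrow> real" where
  "chan_n W xs ys zs = (\<Prod>i<length xs. W (xs ! i) (ys ! i) (zs ! i))"

text \<open>A 3-partite box: P (w1,w2) v1 v2 a b1 b2 = probability of outputs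
  (a, b1, b2) (transmitter, Rx-1, Rx-2) given inputs ((w1,w2), v1, v2).\<close>
type_synonym ('x,'y1,'y2) box =
  "nat \<times> nat \<Rightarrow> 'y1 list \<Rightarrow> 'y2 list \<Rightarrow> 'x list \<Rightarrow> nat \<Rightarrow> nat \<Rightarrow> real"

text \<open>Message sets are {..<m1} and {..<m2}; the transmitter's output alphabet is the
  set of length-n input sequences, the receivers' input alphabets are length-n output
  sequences, the receivers' output alphabet is the finite set B.\<close>
definition msgs :: "nat \<Rightarrow> nat \<Rightarrow> (nat \<times> nat) set" where
  "msgs m1 m2 = {..<m1} \<times> {..<m2}"

definition cond_pmf_box :: "nat \<Rightarrow> nat \<Rightarrow> nat \<Rightarrow> nat set \<Rightarrow> ('x,'y1,'y2) box \<Rightarrow> bool" where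
  "cond_pmf_box n m1 m2 B P \<longleftrightarrow> finite B \<and>
    (\<forall>u\<in>msgs m1 m2. \<forall>v1\<in>seqs n. \<forall>v2\<in>seqs n.
      (\<forall>a\<in>seqs n. \<forall>b1\<in>B. \<forall>b2\<in>B. P u v1 v2 a b1 b2 \<ge> 0) \<and>
      (\<Sum>a\<in>seqs n. \<Sum>b1\<in>B. \<Sum>b2\<in>B. P u v1 v2 a b1 b2) = 1)"

text \<open>Non-signalling: for every subset of parties, the marginal of their outputs
  depends only on their inputs (all nonempty proper subsets listed).\<close>
definition ns_box :: "nat \<Rightarrow> nat \<Rightarrow> nat \<Rightarrow> nat set \<Rightarrow> ('x,'y1,'y2) box \<Rightarrow> bool" where
  "ns_box n m1 m2 B P \<longleftrightarrow> cond_pmf_box n m1 m2 B P \<and>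
    (\<forall>u\<in>msgs m1 m2. \<forall>u'\<in>msgs m1 m2. \<forall>v1\<in>seqs n. \<forall>v1'\<in>seqs n.
     \<forall>v2\<in>seqs n. \<forall>v2'\<in>seqs n. \<forall>a\<in>seqs n. \<forall>b1\<in>B. \<forall>b2\<in>B.
      \<comment> \<open>parties {Tx, Rx-1}\<close>
      (\<Sum>c\<in>B. P u v1 v2 a b1 c) = (\<Sum>c\<in>B. P u v1 v2' a b1 c) \<and>
      \<comment> \<open>parties {Tx, Rx-2}\<close>
      (\<Sum>c\<in>B. P u v1 v2 a c b2) = (\<Sum>c\<in>B. P u v1' v2 a c b2) \<and>
      \<comment> \<open>parties {Rx-1, Rx-2}\<close>
      (\<Sum>x\<in>seqs n. P u v1 v2 x b1 b2) = (\<Sum>x\<in>seqs n. P u' v1 v2 x b1 b2) \<and>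
      \<comment> \<open>party {Tx}\<close>
      (\<Sum>c\<in>B. \<Sum>d\<in>B. P u v1 v2 a c d) = (\<Sum>c\<in>B. \<Sum>d\<in>B. P u v1' v2' a c d) \<and>
      \<comment> \<open>party {Rx-1}\<close>
      (\<Sum>x\<in>seqs n. \<Sum>d\<in>B. P u v1 v2 x b1 d) = (\<Sum>x\<in>seqs n. \<Sum>d\<in>B. P u' v1 v2' x b1 d) \<and>
      \<comment> \<open>party {Rx-2}\<close>
      (\<Sum>x\<in>seqs n. \<Sum>c\<in>B. P u v1 v2 x c b2) = (\<Sum>x\<in>seqs n. \<Sum>c\<in>B. P u' v1' v2 x c b2))"

text \<open>Classical scheme: stochastic encoder E and stochastic decoders D1, D2; the joint
  law is the product (written as a box of product form).\<close>
definition classical_box :: "nat \<Rightarrow> nat \<Rightarrow> nat \<Rightarrow> nat set \<Rightarrow> ('x,'y1,'y2) box \<Rightarrow> bool" where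
  "classical_box n m1 m2 B P \<longleftrightarrow> finite B \<and>
    (\<exists>(E :: nat \<times> nat \<Rightarrow> 'x list \<Rightarrow> real) (D1 :: 'y1 list \<Rightarrow> nat \<Rightarrow> real)
       (D2 :: 'y2 list \<Rightarrow> nat \<Rightarrow> real).
      (\<forall>u\<in>msgs m1 m2. (\<forall>a\<in>seqs n. E u a \<ge> 0) \<and> (\<Sum>a\<in>seqs n. E u a) = 1) \<and>
      (\<forall>v\<in>seqs n. (\<forall>b\<in>B. D1 v b \<ge> 0) \<and> (\<Sum>b\<in>B. D1 v b) = 1) \<and>
      (\<forall>v\<in>seqs n. (\<forall>b\<in>B. D2 v b \<ge> 0) \<and> (\<Sum>b\<in>B. D2 v b) = 1) \<and>
      (\<forall>u v1 v2 a b1 b2. P u v1 v2 a b1 b2 = E u a * D1 v1 b1 * D2 v2 b2))"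

definition err1 :: "('x,'y1,'y2) chan \<Rightarrow> nat \<Rightarrow> nat \<Rightarrow> nat \<Rightarrow> nat set \<Rightarrow> ('x,'y1,'y2) box \<Rightarrow> real" where
  "err1 W n m1 m2 B P =
    (\<Sum>w1<m1. \<Sum>w2<m2. \<Sum>a\<in>seqs n. \<Sum>y1\<in>seqs n. \<Sum>y2\<in>seqs n. \<Sum>b1\<in>B. \<Sum>b2\<in>B.
       (if b1 \<noteq> w1 then P (w1, w2) y1 y2 a b1 b2 * chan_n W a y1 y2 else 0))
     / (real m1 * real m2)"

definition err2 :: "('x,'y1,'y2) chan \<Rightarrow> nat \<Rightarrow> nat \<Rightarrow> nat \<Rightarrow> nat set \<Rightarrow> ('x,'y1,'y2) box \<Rightarrow> real" where
  "err2 W n m1 m2 B P =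
    (\<Sum>w1<m1. \<Sum>w2<m2. \<Sum>a\<in>seqs n. \<Sum>y1\<in>seqs n. \<Sum>y2\<in>seqs n. \<Sum>b1\<in>B. \<Sum>b2\<in>B.
       (if b2 \<noteq> w2 then P (w1, w2) y1 y2 a b1 b2 * chan_n W a y1 y2 else 0))
     / (real m1 * real m2)"

definition achievable ::
  "(nat \<Rightarrow> nat \<Rightarrow> nat \<Rightarrow> nat set \<Rightarrow> ('x,'y1,'y2) box \<Rightarrow> bool) \<Rightarrow> ('x,'y1,'y2) chan \<Rightarrow> real \<times> real \<Rightarrow> bool" where
  "achievable valid W R \<longleftrightarrow>
    (\<exists>(m1 :: nat \<Rightarrow> nat) (m2 :: nat \<Rightarrow> nat) (B :: nat \<Rightarrow> nat set) (P :: nat \<Rightarrow> ('x,'y1,'y2) box).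
      (\<forall>n. m1 n \<ge> 1 \<and> m2 n \<ge> 1 \<and> valid n (m1 n) (m2 n) (B n) (P n)) \<and>
      ((\<lambda>n. max (err1 W n (m1 n) (m2 n) (B n) (P n)) (err2 W n (m1 n) (m2 n) (B n) (P n)))
         \<longlonglongrightarrow> 0) \<and>
      (\<exists>L. ((\<lambda>n. log 2 (real (m1 n)) / real n) \<longlonglongrightarrow> L) \<and> fst R \<le> L) \<and>
      (\<exists>L. ((\<lambda>n. log 2 (real (m2 n)) / real n) \<longlonglongrightarrow> L) \<and> snd R \<le> L))"

definition capacity_region :: "('x,'y1,'y2) chan \<Rightarrow> (real \<times> real) set" where
  "capacity_region W = closure {R. achievable classical_box W R}"

definition capacity_region_NS :: "('x,'y1,'y2) chan \<Rightarrow> (real \<times> real) set" where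
  "capacity_region_NS W = closure {R. achievable ns_box W R}"

definition bc_chan :: "('a::{field,finite} \<times> 'a, 'a \<times> 'a, 'a \<times> 'a) chan" where
  "bc_chan x y1 y2 =
    (if snd y2 \<noteq> 0 \<and> y1 = x \<and> fst y2 = snd y2 * fst x + snd x
     then 1 / (real CARD('a) - 1) else 0)"

end

theory Submission
  imports Defs
begin

(* Rx-2 observes, besides the uniformly random gain sequence G, only the sequence G X1 + X2: one of q^n
   symbol sequences.  A non-signalling box cannot convey the transmitter's input to Rx-2, so Rx-2 still
   distinguishes at most q^n messages and R2 <= log q.  This is attained: X1 carries message 1, X2 is
   uniform, and the box lets Rx-2 subtract G X1 + X2 from its observation and add the codeword of
   message 2.
   Without assistance, reliable decoding at Rx-1 spreads the codewords of each message 2 over about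
   2^(n R1) inputs.  For gains G and k G with k <> 0, 1 the projections G X1 + X2 and k G X1 + X2
   together determine the input, so few inputs are likely under both; averaging over the pairing of G
   with k G gives R1 / 2 + R2 <= log q, and time sharing attains R2 = log q / 2 at R1 = log q. *)

lemma in_seqs [simp]: "xs \<in> seqs n \<longleftrightarrow> length xs = n"
  by (simp add: seqs_def)

lemma seqs_eq_lists_length: "seqs n = {xs. set xs \<subseteq> UNIV \<and> length xs = n}"
  by (simp add: seqs_def)

lemma finite_seqs [simp, intro]: "finite (seqs n :: 'a::finite list set)"
  unfolding seqs_eq_lists_length by (rule finite_lists_length_eq) simp

lemma card_seqs: "card (seqs n :: 'a::finite list set) = CARD('a) ^ n"
  unfolding seqs_eq_lists_length by (subst card_lists_length_eq) simp_all

lemma sum_seqs_zip: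
  fixes h :: "('a::finite \<times> 'b::finite) list \<Rightarrow> real"
  shows "(\<Sum>a\<in>seqs n. h a) = (\<Sum>x\<in>seqs n. \<Sum>r\<in>seqs n. h (zip x r))"
proof -
  have "bij_betw (\<lambda>(x, r). zip x r) (seqs n \<times> seqs n) (seqs n :: ('a \<times> 'b) list set)"
    by (rule bij_betw_byWitness[where f' = "\<lambda>a. (map fst a, map snd a)"])
       (auto simp: zip_map_fst_snd)
  then have "(\<Sum>a\<in>seqs n. h a) = (\<Sum>(x, r)\<in>seqs n \<times> seqs n. h (zip x r))"
    by (subst sum.reindex_bij_betw[symmetric]) (simp_all add: case_prod_unfold)
  then show ?thesis
    by (simp add: sum.cartesian_product)
qed

lemma seqs_coding:
  obtains enc :: "nat \<Rightarrow> 'a::finite list" and dec :: "'a list \<Rightarrow> nat"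
  where "\<And>w. w < CARD('a) ^ n \<Longrightarrow> enc w \<in> seqs n"
    and "\<And>w. w < CARD('a) ^ n \<Longrightarrow> dec (enc w) = w"
    and "\<And>x. x \<in> seqs n \<Longrightarrow> dec x < CARD('a) ^ n"
    and "\<And>x. x \<in> seqs n \<Longrightarrow> enc (dec x) = x"
proof -
  have "\<exists>enc. bij_betw enc {..<CARD('a) ^ n} (seqs n :: 'a list set)"
    by (rule finite_same_card_bij) (simp_all add: card_seqs)
  then obtain enc where bij: "bij_betw enc {..<CARD('a) ^ n} (seqs n :: 'a list set)" ..
  have dec: "bij_betw (inv_into {..<CARD('a) ^ n} enc) (seqs n) {..<CARD('a) ^ n}"
    by (rule bij_betw_inv_into[OF bij])
  show thesis
    by (rule that[of enc "inv_into {..<CARD('a) ^ n} enc"])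
       (use bij dec in \<open>auto simp: bij_betw_def bij_betw_inv_into_right\<close>)
qed

lemma sum_comp_le_sum_sum:
  fixes h :: "'b \<Rightarrow> 'a \<Rightarrow> real"
  assumes "finite Y" "f ` S \<subseteq> Y" "\<And>y a. y \<in> Y \<Longrightarrow> a \<in> S \<Longrightarrow> 0 \<le> h y a"
  shows "(\<Sum>a\<in>S. h (f a) a) \<le> (\<Sum>y\<in>Y. \<Sum>a\<in>S. h y a)"
proof -
  have "(\<Sum>a\<in>S. h (f a) a) \<le> (\<Sum>a\<in>S. \<Sum>y\<in>Y. h y a)"
    using assms by (intro sum_mono member_le_sum) auto
  then show ?thesis
    by (simp add: sum.swap[of _ S])
qed

lemma sum_if_mem_le:
  fixes f :: "'a \<Rightarrow> real"
  assumes "finite A" "finite B" "\<And>b. b \<in> B \<Longrightarrow> 0 \<le> f b"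
  shows "(\<Sum>w\<in>A. if w \<in> B then f w else 0) \<le> sum f B"
proof -
  have "(\<Sum>w\<in>A. if w \<in> B then f w else 0) = sum f (A \<inter> B)"
    using assms by (simp add: sum.inter_restrict)
  also have "\<dots> \<le> sum f B"
    using assms by (intro sum_mono2) auto
  finally show ?thesis .
qed

lemma sum_sum_if_eq_mult:
  fixes f g :: "'b \<Rightarrow> real"
  shows "(\<Sum>b1\<in>B. \<Sum>b2\<in>B. if b1 = w then f b1 * g b2 else 0) = (if w \<in> B then f w else 0) * sum g B"
    and "(\<Sum>b1\<in>B. \<Sum>b2\<in>B. if b2 = w then f b1 * g b2 else 0) = sum f B * (if w \<in> B then g w else 0)"
proof -
  have "(if b1 = w then f b1 * g b2 else 0) = (if b1 = w then f b1 else 0) * g b2"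
    and "(if b2 = w then f b1 * g b2 else 0) = f b1 * (if b2 = w then g b2 else 0)" for b1 b2
    by simp_all
  then show "(\<Sum>b1\<in>B. \<Sum>b2\<in>B. if b1 = w then f b1 * g b2 else 0) = (if w \<in> B then f w else 0) * sum g B"
    and "(\<Sum>b1\<in>B. \<Sum>b2\<in>B. if b2 = w then f b1 * g b2 else 0) = sum f B * (if w \<in> B then g w else 0)"
    by (simp_all only: sum_product[symmetric]) (cases "finite B"; simp)+
qed

lemma card_preimage_pair_le:
  assumes "inj_on (\<lambda>a. (f a, g a)) S" "finite A" "finite B"
  shows "card {a \<in> S. f a \<in> A \<and> g a \<in> B} \<le> card A * card B"
proof -
  have "card {a \<in> S. f a \<in> A \<and> g a \<in> B} \<le> card (A \<times> B)"
    using assms by (intro card_inj_on_le[where f = "\<lambda>a. (f a, g a)"]) (auto intro: inj_on_subset)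
  then show ?thesis
    by (simp add: card_cartesian_product)
qed

definition heavy_values :: "('a \<Rightarrow> real) \<Rightarrow> 'a set \<Rightarrow> ('a \<Rightarrow> 'b) \<Rightarrow> real \<Rightarrow> 'b set" where
  "heavy_values p S f l = {y. l < sum p {a \<in> S. f a = y}}"

lemma heavy_values_subset: "0 \<le> l \<Longrightarrow> heavy_values p S f l \<subseteq> f ` S"
proof
  fix y assume l: "0 \<le> l" and y: "y \<in> heavy_values p S f l"
  show "y \<in> f ` S"
  proof (rule ccontr)
    assume "y \<notin> f ` S"
    then have "{a \<in> S. f a = y} = {}"
      by blast
    then have "sum p {a \<in> S. f a = y} = 0"
      by (simp only: sum.empty)
    then show False
      using l y by (simp add: heavy_values_def)
  qed
qed

lemma finite_heavy_values: "finite S \<Longrightarrow> 0 \<le> l \<Longrightarrow> finite (heavy_values p S f l)"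
  by (rule finite_subset[OF heavy_values_subset]) simp_all

lemma card_heavy_values_le:
  assumes S: "finite S" and p: "\<And>a. a \<in> S \<Longrightarrow> 0 \<le> p a" and l: "0 < l"
  shows "l * card (heavy_values p S f l) \<le> sum p S"
proof -
  let ?H = "heavy_values p S f l"
  have "l * card ?H = (\<Sum>y\<in>?H. l)"
    by simp
  also have "\<dots> \<le> (\<Sum>y\<in>?H. sum p {a \<in> S. f a = y})"
    by (intro sum_mono) (simp add: heavy_values_def less_imp_le)
  also have "\<dots> \<le> (\<Sum>y\<in>f ` S. sum p {a \<in> S. f a = y})"
    using S p l heavy_values_subset[of l p S f] by (intro sum_mono2 sum_nonneg) auto
  also have "\<dots> = sum p S"
    using S by (rule sum.image_gen[symmetric])
  finally show ?thesis .
qed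

lemma sum_mult_comp_le_heavy_light:
  assumes S: "finite S" and p: "\<And>a. a \<in> S \<Longrightarrow> 0 \<le> p a"
    and c: "\<And>a. a \<in> S \<Longrightarrow> 0 \<le> c (f a) \<and> c (f a) \<le> 1" and l: "0 \<le> l"
  shows "(\<Sum>a\<in>S. p a * c (f a))
    \<le> sum p {a \<in> S. f a \<in> heavy_values p S f l} + l * (\<Sum>y\<in>f ` S. c y)"
proof -
  let ?H = "heavy_values p S f l" and ?w = "\<lambda>y. sum p {a \<in> S. f a = y}"
  have "(\<Sum>a\<in>S. p a * c (f a)) = (\<Sum>y\<in>f ` S. ?w y * c y)"
    using S by (simp add: sum.image_gen[of S "\<lambda>a. p a * c (f a)" f] sum_distrib_right)
  also have "\<dots> \<le> (\<Sum>y\<in>f ` S. (if y \<in> ?H then ?w y else 0) + l * c y)"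
  proof (intro sum_mono)
    fix y assume "y \<in> f ` S"
    then have "0 \<le> c y" "c y \<le> 1" "0 \<le> ?w y"
      using c p by (auto intro: sum_nonneg)
    then show "?w y * c y \<le> (if y \<in> ?H then ?w y else 0) + l * c y"
      using l by (cases "y \<in> ?H") (auto simp: heavy_values_def mult_left_le mult_right_mono add_increasing2)
  qed
  also have "(\<Sum>y\<in>f ` S. (if y \<in> ?H then ?w y else 0) + l * c y)
      = sum p {a \<in> S. f a \<in> ?H} + l * (\<Sum>y\<in>f ` S. c y)"
  proof -
    have fib: "(\<Sum>a\<in>{a \<in> S. f a = y}. if f a \<in> ?H then p a else 0)
        = (if y \<in> ?H then ?w y else 0)" for y
    proof -
      have "(\<Sum>a\<in>{a \<in> S. f a = y}. if f a \<in> ?H then p a else 0)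
          = (\<Sum>a\<in>{a \<in> S. f a = y}. if y \<in> ?H then p a else 0)"
        by (rule sum.cong) auto
      then show ?thesis
        by simp
    qed
    have "sum p {a \<in> S. f a \<in> ?H} = (\<Sum>a\<in>S. if f a \<in> ?H then p a else 0)"
      using S by (rule sum.inter_filter)
    also have "\<dots> = (\<Sum>y\<in>f ` S. \<Sum>a\<in>{a \<in> S. f a = y}. if f a \<in> ?H then p a else 0)"
      using S by (rule sum.image_gen)
    finally have "sum p {a \<in> S. f a \<in> ?H} = (\<Sum>y\<in>f ` S. if y \<in> ?H then ?w y else 0)"
      using fib by simp
    then show ?thesis
      by (simp add: sum.distrib sum_distrib_left)
  qed
  finally show ?thesis .
qed

(* Reliable decoding forces the codewords to be spread: they put mass at most card S on any
   set S of inputs, up to the decoding errors. *)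
lemma codebook_mass_le:
  fixes E c :: "nat \<Rightarrow> 'x \<Rightarrow> real"
  assumes X: "finite X" and S: "S \<subseteq> X"
    and E_nonneg: "\<And>w a. w < m \<Longrightarrow> a \<in> X \<Longrightarrow> 0 \<le> E w a"
    and E_sum: "\<And>w. w < m \<Longrightarrow> sum (E w) X = 1"
    and c_nonneg: "\<And>w a. a \<in> X \<Longrightarrow> 0 \<le> c w a"
    and c_sum: "\<And>a. a \<in> X \<Longrightarrow> (\<Sum>w<m. c w a) \<le> 1"
  shows "(\<Sum>a\<in>S. \<Sum>w<m. E w a) \<le> real (card S) + real m - (\<Sum>w<m. \<Sum>a\<in>X. E w a * c w a)"
proof -
  have E_le: "E w a \<le> 1" if "w < m" "a \<in> X" for w a
    using member_le_sum[of a X "E w"] E_nonneg E_sum that X by simp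
  have c_le: "c w a \<le> 1" if "w < m" "a \<in> X" for w a
    using member_le_sum[of w "{..<m}" "\<lambda>w. c w a"] c_nonneg c_sum that by force
  have decoded: "(\<Sum>a\<in>S. \<Sum>w<m. E w a * c w a) \<le> real (card S)"
  proof -
    have "(\<Sum>a\<in>S. \<Sum>w<m. E w a * c w a) \<le> (\<Sum>a\<in>S. \<Sum>w<m. c w a)"
      using S E_nonneg E_le c_nonneg by (intro sum_mono mult_left_le_one_le) auto
    also have "\<dots> \<le> (\<Sum>a\<in>S. 1)"
      using S c_sum by (intro sum_mono) auto
    finally show ?thesis
      by simp
  qed
  have missed: "(\<Sum>a\<in>S. \<Sum>w<m. E w a * (1 - c w a)) \<le> real m - (\<Sum>w<m. \<Sum>a\<in>X. E w a * c w a)"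
  proof -
    have "(\<Sum>a\<in>S. \<Sum>w<m. E w a * (1 - c w a)) \<le> (\<Sum>a\<in>X. \<Sum>w<m. E w a * (1 - c w a))"
      using X S E_nonneg c_le by (intro sum_mono2 sum_nonneg mult_nonneg_nonneg) auto
    also have "\<dots> = (\<Sum>w<m. sum (E w) X - (\<Sum>a\<in>X. E w a * c w a))"
      by (simp add: sum.swap[of _ X] right_diff_distrib sum_subtractf)
    also have "\<dots> = real m - (\<Sum>w<m. \<Sum>a\<in>X. E w a * c w a)"
      using E_sum by (simp add: sum_subtractf)
    finally show ?thesis .
  qed
  have "(\<Sum>a\<in>S. \<Sum>w<m. E w a) = (\<Sum>a\<in>S. \<Sum>w<m. E w a * c w a) + (\<Sum>a\<in>S. \<Sum>w<m. E w a * (1 - c w a))"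
    by (simp add: algebra_simps flip: sum.distrib)
  then show ?thesis
    using decoded missed by linarith
qed

lemma heavy_pair_mass_le:
  fixes p :: "'x \<Rightarrow> real"
  assumes S: "finite S" and p_nonneg: "\<And>a. a \<in> S \<Longrightarrow> 0 \<le> p a" and p_sum: "sum p S = 1"
    and spread: "\<And>T. T \<subseteq> S \<Longrightarrow> sum p T \<le> real (card T) / m + \<epsilon>"
    and inj: "inj_on (\<lambda>a. (f a, g a)) S" and l: "0 < l" and m: "0 < m"
  shows "sum p {a \<in> S. f a \<in> heavy_values p S f l} + sum p {a \<in> S. g a \<in> heavy_values p S g l}
    \<le> 1 + 1 / (l\<^sup>2 * m) + \<epsilon>"
proof -
  let ?Vf = "heavy_values p S f l" and ?Vg = "heavy_values p S g l"
  let ?Hf = "{a \<in> S. f a \<in> ?Vf}" and ?Hg = "{a \<in> S. g a \<in> ?Vg}"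
  have "l * card ?Vf \<le> sum p S" "l * card ?Vg \<le> sum p S"
    using S p_nonneg l by (intro card_heavy_values_le; simp)+
  then have "real (card ?Vf) \<le> 1 / l" "real (card ?Vg) \<le> 1 / l"
    using p_sum l by (simp_all add: field_simps)
  have "?Hf \<inter> ?Hg = {a \<in> S. f a \<in> ?Vf \<and> g a \<in> ?Vg}"
    by auto
  then have "card (?Hf \<inter> ?Hg) \<le> card ?Vf * card ?Vg"
    using S l by (simp add: card_preimage_pair_le[OF inj] finite_heavy_values)
  then have "real (card (?Hf \<inter> ?Hg)) \<le> real (card ?Vf) * real (card ?Vg)"
    by (simp flip: of_nat_mult)
  also have "\<dots> \<le> (1 / l) * (1 / l)"
    using \<open>real (card ?Vf) \<le> 1 / l\<close> \<open>real (card ?Vg) \<le> 1 / l\<close> l by (intro mult_mono) simp_all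
  finally have "real (card (?Hf \<inter> ?Hg)) / m \<le> (1 / l) * (1 / l) / m"
    using m by (intro divide_right_mono) simp_all
  moreover have "sum p (?Hf \<inter> ?Hg) \<le> real (card (?Hf \<inter> ?Hg)) / m + \<epsilon>"
    by (intro spread) auto
  ultimately have both: "sum p (?Hf \<inter> ?Hg) \<le> 1 / (l\<^sup>2 * m) + \<epsilon>"
    by (simp add: power2_eq_square)
  have "sum p (?Hf \<union> ?Hg) \<le> sum p S"
    using S p_nonneg by (intro sum_mono2) auto
  then show ?thesis
    using sum_Un[of ?Hf ?Hg p] S p_sum both by simp
qed

lemma limit_le_of_eventually_le:
  fixes r :: "nat \<Rightarrow> real"
  assumes "r \<longlonglongrightarrow> L" and "\<forall>\<^sub>F n in sequentially. r n \<le> c + C / real n"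
  shows "L \<le> c"
proof -
  have "(\<lambda>n. c + C * (1 / real n)) \<longlonglongrightarrow> c + C * 0"
    by (intro tendsto_intros lim_1_over_n)
  then show ?thesis
    using tendsto_le[OF trivial_limit_sequentially _ assms(1)] assms(2) by simp
qed

lemma log2_div_le_of_less_pow:
  fixes x b :: real
  assumes "0 < x" "x < 2 ^ k * b ^ n" "0 < b" "0 < n"
  shows "log 2 x / real n \<le> log 2 b + real k / real n"
proof -
  have "log 2 x < log 2 (2 ^ k * b ^ n)"
    using assms by (subst log_less_cancel_iff) auto
  also have "\<dots> = real k + real n * log 2 b"
    using assms by (simp add: log_mult log_nat_power)
  finally show ?thesis
    using assms by (simp add: field_simps)
qed

lemma tendsto_log_power_rate:
  assumes "(\<lambda>n. real (f n) / real n) \<longlonglongrightarrow> c"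
  shows "(\<lambda>n. log 2 (real (b ^ f n)) / real n) \<longlonglongrightarrow> c * log 2 (real b)"
proof -
  have "(\<lambda>n. log 2 (real (b ^ f n)) / real n) = (\<lambda>n. real (f n) / real n * log 2 (real b))"
    by (simp add: log_nat_power)
  then show ?thesis
    using tendsto_mult_right[OF assms] by simp
qed

lemma tendsto_div_2_rate: "(\<lambda>n. real (n div 2) / real n) \<longlonglongrightarrow> 1 / 2"
proof (rule tendsto_sandwich)
  show "\<forall>\<^sub>F n in sequentially. 1 / 2 - 1 / 2 * (1 / real n) \<le> real (n div 2) / real n"
    using eventually_ge_at_top[of "1 :: nat"]
  proof eventually_elim
    case (elim n)
    have "real n \<le> 2 * real (n div 2) + 1"
      by linarith
    then have "(real n - 1) / 2 / real n \<le> real (n div 2) / real n"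
      by (intro divide_right_mono) simp_all
    then show ?case
      using elim by (simp add: diff_divide_distrib)
  qed
  show "\<forall>\<^sub>F n in sequentially. real (n div 2) / real n \<le> 1 / 2"
    using eventually_ge_at_top[of "1 :: nat"]
  proof eventually_elim
    case (elim n)
    have "2 * real (n div 2) \<le> real n"
      by linarith
    then have "real (n div 2) / real n \<le> real n / 2 / real n"
      by (intro divide_right_mono) simp_all
    then show ?case
      using elim by simp
  qed
  show "(\<lambda>n. 1 / 2 - 1 / 2 * (1 / real n)) \<longlonglongrightarrow> 1 / 2"
    using tendsto_diff[OF tendsto_const tendsto_mult_right_zero[OF lim_1_over_n], of "1 / 2 :: real" "1 / 2"]
    by simp
qed simp

section \<open>The channel as a uniformly random gain\<close>

definition gains :: "nat \<Rightarrow> 'a::field list set" where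
  "gains n = {G. length G = n \<and> 0 \<notin> set G}"

definition lincomb :: "'a::field list \<Rightarrow> ('a \<times> 'a) list \<Rightarrow> 'a list" where
  "lincomb G a = map2 (\<lambda>g x. g * fst x + snd x) G a"

definition rx2_output :: "'a::field list \<Rightarrow> ('a \<times> 'a) list \<Rightarrow> ('a \<times> 'a) list" where
  "rx2_output G a = zip (lincomb G a) G"

lemma in_gains: "G \<in> gains n \<longleftrightarrow> length G = n \<and> (\<forall>i<n. G ! i \<noteq> 0)"
  by (auto simp: gains_def in_set_conv_nth)

lemma gains_ne_empty [simp]: "gains n \<noteq> {}"
proof -
  have "replicate n 1 \<in> gains n"
    by (simp add: gains_def)
  then show ?thesis
    by blast
qed

lemma gains_subset_seqs: "gains n \<subseteq> seqs n"
  by (auto simp: gains_def)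

lemma finite_gains [simp, intro]: "finite (gains n :: 'a::{field,finite} list set)"
  using gains_subset_seqs finite_seqs by (rule finite_subset)

lemma card_gains: "card (gains n :: 'a::{field,finite} list set) = (CARD('a) - 1) ^ n"
proof -
  have "gains n = {G :: 'a list. set G \<subseteq> UNIV - {0} \<and> length G = n}"
    by (auto simp: gains_def)
  then show ?thesis
    by (simp add: card_lists_length_eq card_Diff_singleton)
qed

lemma real_card_gains: "real (card (gains n :: 'a::{field,finite} list set)) = (real CARD('a) - 1) ^ n"
  by (simp add: card_gains)

lemma card_gains_pos: "0 < card (gains n :: 'a::{field,finite} list set)"
  by (simp add: card_gt_0_iff)

lemma length_lincomb [simp]: "length (lincomb G a) = min (length G) (length a)"
  by (simp add: lincomb_def)

lemma nth_lincomb [simp]: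
  "i < length G \<Longrightarrow> i < length a \<Longrightarrow> lincomb G a ! i = G ! i * fst (a ! i) + snd (a ! i)"
  by (simp add: lincomb_def)

lemma rx2_output_in_seqs: "G \<in> gains n \<Longrightarrow> a \<in> seqs n \<Longrightarrow> rx2_output G a \<in> seqs n"
  by (simp add: rx2_output_def gains_def)

lemma inj_on_rx2_output: "a \<in> seqs n \<Longrightarrow> inj_on (\<lambda>G. rx2_output G a) (gains n)"
  by (rule inj_on_inverseI[where g = "map snd"]) (simp add: rx2_output_def gains_def)

lemma chan_n_bc_chan:
  fixes a y1 y2 :: "('a::{field,finite} \<times> 'a) list"
  assumes "a \<in> seqs n" "y1 \<in> seqs n" "y2 \<in> seqs n"
  shows "chan_n bc_chan a y1 y2 =
    (if y1 = a \<and> y2 \<in> (\<lambda>G. rx2_output G a) ` gains n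
     then 1 / real (card (gains n :: 'a list set)) else 0)"
proof -
  define ok where "ok i \<longleftrightarrow> snd (y2 ! i) \<noteq> 0 \<and> y1 ! i = a ! i \<and>
    fst (y2 ! i) = snd (y2 ! i) * fst (a ! i) + snd (a ! i)" for i
  have ok_iff: "(\<forall>i<n. ok i) \<longleftrightarrow> y1 = a \<and> y2 \<in> (\<lambda>G. rx2_output G a) ` gains n"
  proof
    assume ok: "\<forall>i<n. ok i"
    have "y1 = a"
      using ok assms by (intro nth_equalityI) (auto simp: ok_def)
    moreover have "map snd y2 \<in> gains n"
      using ok assms by (auto simp: in_gains ok_def)
    moreover have "y2 = rx2_output (map snd y2) a"
      using ok assms by (intro nth_equalityI) (auto simp: rx2_output_def ok_def prod_eq_iff)
    ultimately show "y1 = a \<and> y2 \<in> (\<lambda>G. rx2_output G a) ` gains n"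
      by blast
  next
    assume "y1 = a \<and> y2 \<in> (\<lambda>G. rx2_output G a) ` gains n"
    then show "\<forall>i<n. ok i"
      using assms by (auto simp: ok_def in_gains rx2_output_def)
  qed
  have "chan_n bc_chan a y1 y2 = (\<Prod>i<n. if ok i then 1 / (real CARD('a) - 1) else 0)"
    using assms by (simp add: chan_n_def bc_chan_def ok_def)
  also have "\<dots> = (if \<forall>i<n. ok i then (1 / (real CARD('a) - 1)) ^ n else 0)"
    by auto
  also have "(1 / (real CARD('a) - 1)) ^ n = 1 / real (card (gains n :: 'a list set))"
    by (simp add: real_card_gains power_one_over)
  finally show ?thesis
    unfolding ok_iff .
qed

lemma sum_chan_n_bc_chan:
  fixes a :: "('a::{field,finite} \<times> 'a) list"
  assumes a: "a \<in> seqs n"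
  shows "(\<Sum>y1\<in>seqs n. \<Sum>y2\<in>seqs n. chan_n bc_chan a y1 y2 * h y1 y2)
    = (\<Sum>G\<in>gains n. h a (rx2_output G a)) / real (card (gains n :: 'a list set))"
proof -
  let ?O = "(\<lambda>G. rx2_output G a) ` gains n" and ?c = "real (card (gains n :: 'a list set))"
  have O: "?O \<subseteq> seqs n"
    using a rx2_output_in_seqs by blast
  have row: "(\<Sum>y2\<in>seqs n. chan_n bc_chan a y1 y2 * h y1 y2)
      = (if y1 = a then \<Sum>y2\<in>seqs n. if y2 \<in> ?O then h a y2 / ?c else 0 else 0)"
    if "y1 \<in> seqs n" for y1
    using a that by (auto simp: chan_n_bc_chan intro: sum.cong)
  have "(\<Sum>y1\<in>seqs n. \<Sum>y2\<in>seqs n. chan_n bc_chan a y1 y2 * h y1 y2)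
      = (\<Sum>y1\<in>seqs n. if y1 = a then \<Sum>y2\<in>seqs n. if y2 \<in> ?O then h a y2 / ?c else 0 else 0)"
    using row by (rule sum.cong[OF refl])
  also have "\<dots> = (\<Sum>y2\<in>seqs n. if y2 \<in> ?O then h a y2 / ?c else 0)"
    using a by simp
  also have "\<dots> = (\<Sum>y2\<in>?O. h a y2 / ?c)"
    by (subst sum.inter_restrict[OF finite_seqs, symmetric]) (simp only: Int_absorb1[OF O])
  also have "\<dots> = (\<Sum>G\<in>gains n. h a (rx2_output G a)) / ?c"
    using a by (simp add: sum.reindex inj_on_rx2_output sum_divide_distrib)
  finally show ?thesis .
qed

lemma bc_chan_stochastic:
  "a \<in> seqs n \<Longrightarrow> (\<Sum>y1\<in>seqs n. \<Sum>y2\<in>seqs n. chan_n (bc_chan :: ('a::{field,finite} \<times> 'a, 'a \<times> 'a, 'a \<times> 'a) chan) a y1 y2) = 1"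
  using sum_chan_n_bc_chan[of a n "\<lambda>_ _. 1"] card_gains_pos[where 'a = 'a, of n] by (simp add: card_gt_0_iff)

lemma bij_betw_scale_gains:
  fixes k :: "'a::field"
  assumes "k \<noteq> 0"
  shows "bij_betw (map ((*) k)) (gains n) (gains n)"
  by (rule bij_betw_byWitness[where f' = "map ((*) (inverse k))"])
     (use assms in \<open>auto simp: gains_def map_idI\<close>)

lemma obtain_ne_0_1:
  assumes "2 < CARD('a)"
  obtains k :: "'a::{field,finite}" where "k \<noteq> 0" "k \<noteq> 1"
proof -
  have "card {0, 1 :: 'a} \<le> 2"
    by (simp add: card_insert_if)
  then have "{0, 1 :: 'a} \<noteq> UNIV"
    using assms by (metis not_le)
  then show ?thesis
    using that by blast
qed

lemma inj_on_lincomb_pair: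
  fixes G G' :: "'a::field list"
  assumes "length G = n" "length G' = n" and distinct: "\<And>i. i < n \<Longrightarrow> G ! i \<noteq> G' ! i"
  shows "inj_on (\<lambda>a. (lincomb G a, lincomb G' a)) (seqs n)"
proof (rule inj_onI)
  fix a b :: "('a \<times> 'a) list"
  assume a: "a \<in> seqs n" and b: "b \<in> seqs n"
    and eq: "(lincomb G a, lincomb G' a) = (lincomb G b, lincomb G' b)"
  show "a = b"
  proof (rule nth_equalityI)
    show "length a = length b"
      using a b by simp
  next
    fix i assume "i < length a"
    then have i: "i < n"
      using a by simp
    have eq1: "G ! i * fst (a ! i) + snd (a ! i) = G ! i * fst (b ! i) + snd (b ! i)"
      and eq2: "G' ! i * fst (a ! i) + snd (a ! i) = G' ! i * fst (b ! i) + snd (b ! i)"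
      using eq i a b assms by (metis nth_lincomb in_seqs prod.inject)+
    have "(G ! i - G' ! i) * (fst (a ! i) - fst (b ! i))
        = (G ! i * fst (a ! i) + snd (a ! i)) - (G ! i * fst (b ! i) + snd (b ! i))
          - ((G' ! i * fst (a ! i) + snd (a ! i)) - (G' ! i * fst (b ! i) + snd (b ! i)))"
      by (simp add: algebra_simps)
    then have "(G ! i - G' ! i) * (fst (a ! i) - fst (b ! i)) = 0"
      by (simp only: eq1 eq2) simp
    then have "fst (a ! i) = fst (b ! i)"
      using distinct[OF i] by simp
    with eq1 show "a ! i = b ! i"
      by (simp add: prod_eq_iff)
  qed
qed

lemma in_msgs [simp]: "u \<in> msgs m1 m2 \<longleftrightarrow> fst u < m1 \<and> snd u < m2"
  by (cases u) (simp add: msgs_def)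

definition event_prob ::
  "('x, 'y1, 'y2) chan \<Rightarrow> nat \<Rightarrow> nat \<Rightarrow> nat \<Rightarrow> nat set \<Rightarrow> ('x, 'y1, 'y2) box
    \<Rightarrow> (nat \<times> nat \<Rightarrow> nat \<Rightarrow> nat \<Rightarrow> bool) \<Rightarrow> real" where
  "event_prob W n m1 m2 B P A =
    (\<Sum>w1<m1. \<Sum>w2<m2. \<Sum>a\<in>seqs n. \<Sum>y1\<in>seqs n. \<Sum>y2\<in>seqs n. \<Sum>b1\<in>B. \<Sum>b2\<in>B.
       (if A (w1, w2) b1 b2 then P (w1, w2) y1 y2 a b1 b2 * chan_n W a y1 y2 else 0))
     / (real m1 * real m2)"

lemma err1_eq_event_prob: "err1 W n m1 m2 B P = event_prob W n m1 m2 B P (\<lambda>u b1 b2. b1 \<noteq> fst u)"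
  by (simp add: err1_def event_prob_def)

lemma err2_eq_event_prob: "err2 W n m1 m2 B P = event_prob W n m1 m2 B P (\<lambda>u b1 b2. b2 \<noteq> snd u)"
  by (simp add: err2_def event_prob_def)

lemma cond_pmf_box_outputs_nonempty:
  assumes "cond_pmf_box n m1 m2 B P" "1 \<le> m1" "1 \<le> m2"
  shows "B \<noteq> {}"
proof
  assume "B = {}"
  moreover have "(\<Sum>a\<in>seqs n. \<Sum>b1\<in>B. \<Sum>b2\<in>B. P (0, 0) (replicate n undefined) (replicate n undefined) a b1 b2) = 1"
    using assms by (simp add: cond_pmf_box_def)
  ultimately show False
    by simp
qed

lemma ns_box_imp_cond_pmf_box: "ns_box n m1 m2 B P \<Longrightarrow> cond_pmf_box n m1 m2 B P"
  by (simp add: ns_box_def)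

lemma ns_box_tx_marginal:
  assumes "ns_box n m1 m2 B P" "1 \<le> m1" "1 \<le> m2" "u \<in> msgs m1 m2"
    "v1 \<in> seqs n" "v2 \<in> seqs n" "v1' \<in> seqs n" "v2' \<in> seqs n" "a \<in> seqs n"
  shows "(\<Sum>b1\<in>B. \<Sum>b2\<in>B. P u v1 v2 a b1 b2) = (\<Sum>b1\<in>B. \<Sum>b2\<in>B. P u v1' v2' a b1 b2)"
proof -
  obtain b where "b \<in> B"
    using assms ns_box_imp_cond_pmf_box cond_pmf_box_outputs_nonempty by blast
  then show ?thesis
    using assms unfolding ns_box_def by blast
qed

lemma ns_box_tx_rx2_marginal:
  assumes "ns_box n m1 m2 B P" "u \<in> msgs m1 m2" "v1 \<in> seqs n" "v1' \<in> seqs n" "v2 \<in> seqs n"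
    "a \<in> seqs n" "b2 \<in> B"
  shows "(\<Sum>b1\<in>B. P u v1 v2 a b1 b2) = (\<Sum>b1\<in>B. P u v1' v2 a b1 b2)"
  using assms unfolding ns_box_def by blast

lemma ns_box_rx2_marginal:
  assumes "ns_box n m1 m2 B P" "u \<in> msgs m1 m2" "u' \<in> msgs m1 m2"
    "v1 \<in> seqs n" "v1' \<in> seqs n" "v2 \<in> seqs n" "b2 \<in> B"
  shows "(\<Sum>a\<in>seqs n. \<Sum>b1\<in>B. P u v1 v2 a b1 b2) = (\<Sum>a\<in>seqs n. \<Sum>b1\<in>B. P u' v1' v2 a b1 b2)"
proof -
  have "replicate n undefined \<in> seqs n"
    by simp
  then show ?thesis
    using assms unfolding ns_box_def by blast
qed

lemma cond_pmf_box_rx2_marginal_sum_le: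
  assumes "cond_pmf_box n m1 m2 B P" "u \<in> msgs m1 m2" "v1 \<in> seqs n" "v2 \<in> seqs n"
  shows "(\<Sum>w<m. if w \<in> B then \<Sum>a\<in>seqs n. \<Sum>b1\<in>B. P u v1 v2 a b1 w else 0) \<le> 1"
proof -
  have "(\<Sum>w<m. if w \<in> B then \<Sum>a\<in>seqs n. \<Sum>b1\<in>B. P u v1 v2 a b1 w else 0)
      \<le> (\<Sum>b\<in>B. \<Sum>a\<in>seqs n. \<Sum>b1\<in>B. P u v1 v2 a b1 b)"
    using assms by (intro sum_if_mem_le sum_nonneg) (auto simp: cond_pmf_box_def)
  also have "\<dots> = (\<Sum>a\<in>seqs n. \<Sum>b\<in>B. \<Sum>b1\<in>B. P u v1 v2 a b1 b)"
    by (rule sum.swap)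
  also have "\<dots> = (\<Sum>a\<in>seqs n. \<Sum>b1\<in>B. \<Sum>b\<in>B. P u v1 v2 a b1 b)"
    by (intro sum.cong refl sum.swap)
  also have "\<dots> = 1"
    using assms by (simp add: cond_pmf_box_def)
  finally show ?thesis .
qed

lemma event_prob_add_compl:
  assumes ns: "ns_box n m1 m2 B P" and m: "1 \<le> m1" "1 \<le> m2"
    and W: "\<And>a. a \<in> seqs n \<Longrightarrow> (\<Sum>y1\<in>seqs n. \<Sum>y2\<in>seqs n. chan_n W a y1 y2) = 1"
  shows "event_prob W n m1 m2 B P A + event_prob W n m1 m2 B P (\<lambda>u b1 b2. \<not> A u b1 b2) = 1"
proof -
  define T where
    "T u a = (\<Sum>b1\<in>B. \<Sum>b2\<in>B. P u (replicate n undefined) (replicate n undefined) a b1 b2)" for u a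
  have T: "(\<Sum>b1\<in>B. \<Sum>b2\<in>B. P u y1 y2 a b1 b2) = T u a"
    if "u \<in> msgs m1 m2" "y1 \<in> seqs n" "y2 \<in> seqs n" "a \<in> seqs n" for u y1 y2 a
    unfolding T_def using ns m that by (intro ns_box_tx_marginal) simp_all
  have T_sum: "(\<Sum>a\<in>seqs n. T u a) = 1" if "u \<in> msgs m1 m2" for u
    using ns_box_imp_cond_pmf_box[OF ns] that by (simp add: T_def cond_pmf_box_def)
  have total: "(\<Sum>y1\<in>seqs n. \<Sum>y2\<in>seqs n. \<Sum>b1\<in>B. \<Sum>b2\<in>B. P u y1 y2 a b1 b2 * chan_n W a y1 y2)
      = T u a" if "u \<in> msgs m1 m2" "a \<in> seqs n" for u a
  proof -
    have "(\<Sum>y1\<in>seqs n. \<Sum>y2\<in>seqs n. \<Sum>b1\<in>B. \<Sum>b2\<in>B. P u y1 y2 a b1 b2 * chan_n W a y1 y2)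
        = (\<Sum>y1\<in>seqs n. \<Sum>y2\<in>seqs n. T u a * chan_n W a y1 y2)"
      using that by (intro sum.cong refl) (simp add: T flip: sum_distrib_right)
    also have "\<dots> = T u a"
      using W[OF that(2)] by (simp flip: sum_distrib_left)
    finally show ?thesis .
  qed
  have if_add_if_not: "(if Q then x else 0) + (if \<not> Q then x else 0) = (x :: real)" for Q x
    by simp
  have "event_prob W n m1 m2 B P A + event_prob W n m1 m2 B P (\<lambda>u b1 b2. \<not> A u b1 b2)
      = (\<Sum>w1<m1. \<Sum>w2<m2. \<Sum>a\<in>seqs n. \<Sum>y1\<in>seqs n. \<Sum>y2\<in>seqs n. \<Sum>b1\<in>B. \<Sum>b2\<in>B.
           P (w1, w2) y1 y2 a b1 b2 * chan_n W a y1 y2) / (real m1 * real m2)"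
    by (simp add: event_prob_def if_add_if_not add_divide_distrib[symmetric] flip: sum.distrib)
  also have "\<dots> = (\<Sum>w1<m1. \<Sum>w2<m2. 1) / (real m1 * real m2)"
    using T_sum by (simp add: total)
  also have "\<dots> = 1"
    using m by simp
  finally show ?thesis .
qed

lemma ns_box_local_times_bipartite:
  fixes D :: "'y1 list \<Rightarrow> nat \<Rightarrow> real" and K :: "nat \<times> nat \<Rightarrow> 'y2 list \<Rightarrow> 'x list \<Rightarrow> nat \<Rightarrow> real"
  assumes B: "finite B"
    and D: "\<And>v b. v \<in> seqs n \<Longrightarrow> b \<in> B \<Longrightarrow> 0 \<le> D v b" "\<And>v. v \<in> seqs n \<Longrightarrow> sum (D v) B = 1"
    and K: "\<And>u v a b. u \<in> msgs m1 m2 \<Longrightarrow> v \<in> seqs n \<Longrightarrow> a \<in> seqs n \<Longrightarrow> b \<in> B \<Longrightarrow> 0 \<le> K u v a b"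
    and K_tx: "\<And>u v a. u \<in> msgs m1 m2 \<Longrightarrow> v \<in> seqs n \<Longrightarrow> a \<in> seqs n \<Longrightarrow> sum (K u v a) B = Ktx u a"
    and K_rx: "\<And>u v b. u \<in> msgs m1 m2 \<Longrightarrow> v \<in> seqs n \<Longrightarrow> b \<in> B \<Longrightarrow> (\<Sum>a\<in>seqs n. K u v a b) = Krx v b"
    and Ktx_sum: "\<And>u. u \<in> msgs m1 m2 \<Longrightarrow> (\<Sum>a\<in>seqs n. Ktx u a) = 1"
  shows "ns_box n m1 m2 B (\<lambda>u v1 v2 a b1 b2. D v1 b1 * K u v2 a b2)"
  unfolding ns_box_def cond_pmf_box_def
  using B D K K_tx K_rx Ktx_sum
  by (simp add: sum_distrib_left[symmetric] sum_distrib_right[symmetric] sum.swap[of _ B "seqs n"])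

lemma classical_box_imp_ns_box:
  fixes P :: "('x, 'y1, 'y2) box"
  assumes "classical_box n m1 m2 B P"
  shows "ns_box n m1 m2 B P"
proof -
  obtain E :: "nat \<times> nat \<Rightarrow> 'x list \<Rightarrow> real" and D1 :: "'y1 list \<Rightarrow> nat \<Rightarrow> real"
    and D2 :: "'y2 list \<Rightarrow> nat \<Rightarrow> real"
    where B: "finite B"
      and E: "\<forall>u\<in>msgs m1 m2. (\<forall>a\<in>seqs n. E u a \<ge> 0) \<and> (\<Sum>a\<in>seqs n. E u a) = 1"
      and D1: "\<forall>v\<in>seqs n. (\<forall>b\<in>B. D1 v b \<ge> 0) \<and> (\<Sum>b\<in>B. D1 v b) = 1"
      and D2: "\<forall>v\<in>seqs n. (\<forall>b\<in>B. D2 v b \<ge> 0) \<and> (\<Sum>b\<in>B. D2 v b) = 1"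
      and P: "\<And>u v1 v2 a b1 b2. P u v1 v2 a b1 b2 = E u a * D1 v1 b1 * D2 v2 b2"
    using assms unfolding classical_box_def by blast
  have "ns_box n m1 m2 B (\<lambda>u v1 v2 a b1 b2. D1 v1 b1 * (E u a * D2 v2 b2))"
    using B D1 by (intro ns_box_local_times_bipartite[where Ktx = E and Krx = D2])
      (use E D2 in \<open>simp_all add: sum_distrib_left[symmetric] sum_distrib_right[symmetric]\<close>)
  moreover have "P = (\<lambda>u v1 v2 a b1 b2. D1 v1 b1 * (E u a * D2 v2 b2))"
    by (simp add: P fun_eq_iff)
  ultimately show ?thesis
    by simp
qed

lemma event_prob_bc_chan:
  "event_prob (bc_chan :: ('a::{field,finite} \<times> 'a, 'a \<times> 'a, 'a \<times> 'a) chan) n m1 m2 B P A =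
    (\<Sum>w1<m1. \<Sum>w2<m2. \<Sum>a\<in>seqs n. \<Sum>G\<in>gains n. \<Sum>b1\<in>B. \<Sum>b2\<in>B.
       if A (w1, w2) b1 b2 then P (w1, w2) a (rx2_output G a) a b1 b2 else 0)
    / (real m1 * real m2 * real (card (gains n :: 'a list set)))"
proof -
  have "(\<Sum>y1\<in>seqs n. \<Sum>y2\<in>seqs n. \<Sum>b1\<in>B. \<Sum>b2\<in>B.
        if A u b1 b2 then P u y1 y2 a b1 b2 * chan_n bc_chan a y1 y2 else 0)
      = (\<Sum>G\<in>gains n. \<Sum>b1\<in>B. \<Sum>b2\<in>B. if A u b1 b2 then P u a (rx2_output G a) a b1 b2 else 0)
        / real (card (gains n :: 'a list set))"
    if "a \<in> seqs n" for u and a :: "('a \<times> 'a) list"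
    using sum_chan_n_bc_chan[OF that, of "\<lambda>y1 y2. \<Sum>b1\<in>B. \<Sum>b2\<in>B. if A u b1 b2 then P u y1 y2 a b1 b2 else 0"]
    by (simp add: sum_distrib_left if_distrib mult.commute cong: if_cong)
  then show ?thesis
    by (simp add: event_prob_def sum_divide_distrib mult.commute)
qed

lemma err1_bc_chan_eq_compl:
  fixes P :: "('a::{field,finite} \<times> 'a, 'a \<times> 'a, 'a \<times> 'a) box"
  assumes "ns_box n m1 m2 B P" "1 \<le> m1" "1 \<le> m2"
  shows "err1 bc_chan n m1 m2 B P = 1 - event_prob bc_chan n m1 m2 B P (\<lambda>u b1 b2. b1 = fst u)"
  using event_prob_add_compl[OF assms bc_chan_stochastic, of "\<lambda>u b1 b2. b1 = fst u"]
  by (simp add: err1_eq_event_prob)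

lemma err2_bc_chan_eq_compl:
  fixes P :: "('a::{field,finite} \<times> 'a, 'a \<times> 'a, 'a \<times> 'a) box"
  assumes "ns_box n m1 m2 B P" "1 \<le> m1" "1 \<le> m2"
  shows "err2 bc_chan n m1 m2 B P = 1 - event_prob bc_chan n m1 m2 B P (\<lambda>u b1 b2. b2 = snd u)"
  using event_prob_add_compl[OF assms bc_chan_stochastic, of "\<lambda>u b1 b2. b2 = snd u"]
  by (simp add: err2_eq_event_prob)

lemma event_prob_bc_chan_eq_0I:
  fixes P :: "('a::{field,finite} \<times> 'a, 'a \<times> 'a, 'a \<times> 'a) box"
  assumes "\<And>w1 w2 a G b1 b2. w1 < m1 \<Longrightarrow> w2 < m2 \<Longrightarrow> a \<in> seqs n \<Longrightarrow> G \<in> gains n \<Longrightarrow>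
      A (w1, w2) b1 b2 \<Longrightarrow> P (w1, w2) a (rx2_output G a) a b1 b2 = 0"
  shows "event_prob bc_chan n m1 m2 B P A = 0"
  unfolding event_prob_bc_chan using assms by (simp add: sum.neutral)

section \<open>Zero-error codes\<close>

context
  fixes n :: nat and enc :: "nat \<Rightarrow> 'a::{field,finite} list" and dec :: "'a list \<Rightarrow> nat"
  assumes enc: "\<And>w. w < CARD('a) ^ n \<Longrightarrow> enc w \<in> seqs n"
    and dec_enc: "\<And>w. w < CARD('a) ^ n \<Longrightarrow> dec (enc w) = w"
    and dec: "\<And>x. x \<in> seqs n \<Longrightarrow> dec x < CARD('a) ^ n"
    and enc_dec: "\<And>x. x \<in> seqs n \<Longrightarrow> enc (dec x) = x"
begin

(* Rx-2 with input v = (y, g) outputs y - (g x1 + x2) + enc w2, which is enc w2 on the actual channel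
   output (ns_guess_rx2_output); the transmitter sends x1 = enc w1 and a uniformly random x2. *)
definition ns_guess :: "('a \<times> 'a) list \<Rightarrow> ('a \<times> 'a) list \<Rightarrow> nat \<Rightarrow> 'a list" where
  "ns_guess v a w = map (\<lambda>i. fst (v ! i) - (snd (v ! i) * fst (a ! i) + snd (a ! i)) + enc w ! i) [0..<n]"

definition ns_tx_rx2 :: "nat \<times> nat \<Rightarrow> ('a \<times> 'a) list \<Rightarrow> ('a \<times> 'a) list \<Rightarrow> nat \<Rightarrow> real" where
  "ns_tx_rx2 u v a b =
    (if map fst a = enc (fst u) \<and> b = dec (ns_guess v a (snd u)) then 1 / real (CARD('a) ^ n) else 0)"

definition ns_code :: "('a \<times> 'a, 'a \<times> 'a, 'a \<times> 'a) box" where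
  "ns_code u v1 v2 a b1 b2 = (if b1 = dec (map fst v1) then 1 else 0) * ns_tx_rx2 u v2 a b2"

lemma ns_guess_in_seqs: "ns_guess v a w \<in> seqs n"
  by (simp add: ns_guess_def)

lemma ns_guess_rx2_output:
  "G \<in> gains n \<Longrightarrow> a \<in> seqs n \<Longrightarrow> w < CARD('a) ^ n \<Longrightarrow> ns_guess (rx2_output G a) a w = enc w"
  using enc[of w] by (intro nth_equalityI) (simp_all add: ns_guess_def rx2_output_def gains_def)

lemma dec_ns_guess_eq_iff:
  assumes "u \<in> msgs (CARD('a) ^ n) (CARD('a) ^ n)" "b < CARD('a) ^ n" "r \<in> seqs n"
  shows "b = dec (ns_guess v (zip (enc (fst u)) r) (snd u)) \<longleftrightarrow>
    r = map (\<lambda>i. fst (v ! i) - snd (v ! i) * enc (fst u) ! i + enc (snd u) ! i - enc b ! i) [0..<n]"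
proof -
  have "b = dec (ns_guess v (zip (enc (fst u)) r) (snd u)) \<longleftrightarrow> ns_guess v (zip (enc (fst u)) r) (snd u) = enc b"
    using assms(2) dec_enc enc_dec ns_guess_in_seqs by metis
  also have "\<dots> \<longleftrightarrow> r = map (\<lambda>i. fst (v ! i) - snd (v ! i) * enc (fst u) ! i + enc (snd u) ! i - enc b ! i) [0..<n]"
    using assms enc by (auto simp: list_eq_iff_nth_eq ns_guess_def algebra_simps)
  finally show ?thesis .
qed

lemma ns_tx_rx2_rx2_marginal:
  assumes "u \<in> msgs (CARD('a) ^ n) (CARD('a) ^ n)" "b < CARD('a) ^ n"
  shows "(\<Sum>a\<in>seqs n. ns_tx_rx2 u v a b) = 1 / real (CARD('a) ^ n)"
proof -
  let ?r0 = "map (\<lambda>i. fst (v ! i) - snd (v ! i) * enc (fst u) ! i + enc (snd u) ! i - enc b ! i) [0..<n]"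
  have "(\<Sum>r\<in>seqs n. ns_tx_rx2 u v (zip x r) b) = (if x = enc (fst u) then 1 / real (CARD('a) ^ n) else 0)"
    if "x \<in> seqs n" for x
  proof (cases "x = enc (fst u)")
    case True
    then have "(\<Sum>r\<in>seqs n. ns_tx_rx2 u v (zip x r) b) = (\<Sum>r\<in>seqs n. if r = ?r0 then 1 / real (CARD('a) ^ n) else 0)"
      using that by (intro sum.cong refl) (simp add: ns_tx_rx2_def dec_ns_guess_eq_iff[OF assms])
    then show ?thesis
      using True by simp
  next
    case False
    then have "(\<Sum>r\<in>seqs n. ns_tx_rx2 u v (zip x r) b) = 0"
      using that by (intro sum.neutral ballI) (simp add: ns_tx_rx2_def)
    then show ?thesis
      using False by simp
  qed
  then have "(\<Sum>x\<in>seqs n. \<Sum>r\<in>seqs n. ns_tx_rx2 u v (zip x r) b)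
      = (\<Sum>x\<in>seqs n. if x = enc (fst u) then 1 / real (CARD('a) ^ n) else 0)"
    by (intro sum.cong refl) simp
  also have "\<dots> = 1 / real (CARD('a) ^ n)"
    using enc assms by simp
  finally show ?thesis
    by (simp add: sum_seqs_zip)
qed

lemma ns_box_ns_code: "ns_box n (CARD('a) ^ n) (CARD('a) ^ n) {..<CARD('a) ^ n} ns_code"
proof -
  let ?M = "CARD('a) ^ n"
  define Ktx :: "nat \<times> nat \<Rightarrow> ('a \<times> 'a) list \<Rightarrow> real"
    where "Ktx u a = (if map fst a = enc (fst u) then 1 / real ?M else 0)" for u a
  have "(\<Sum>a\<in>seqs n. Ktx u a) = 1" if "u \<in> msgs ?M ?M" for u
  proof -
    have "(\<Sum>x\<in>seqs n. \<Sum>r\<in>seqs n. Ktx u (zip x r))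
        = (\<Sum>x\<in>seqs n. if x = enc (fst u) then real (card (seqs n :: 'a list set)) / real ?M else 0)"
      by (intro sum.cong refl) (simp add: Ktx_def)
    also have "\<dots> = 1"
      using enc that by (simp add: card_seqs)
    finally show ?thesis
      by (simp add: sum_seqs_zip)
  qed
  moreover have "sum (ns_tx_rx2 u v a) {..<?M} = Ktx u a" for u v a
    using dec[OF ns_guess_in_seqs] by (simp add: ns_tx_rx2_def Ktx_def)
  ultimately show ?thesis
    unfolding ns_code_def
    by (intro ns_box_local_times_bipartite[where Ktx = Ktx and Krx = "\<lambda>_ _. 1 / real ?M"])
      (use dec ns_tx_rx2_rx2_marginal in \<open>simp_all add: ns_tx_rx2_def\<close>)
qed

lemma ns_code_zero_error:
  "err1 bc_chan n (CARD('a) ^ n) (CARD('a) ^ n) {..<CARD('a) ^ n} ns_code = 0"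
  "err2 bc_chan n (CARD('a) ^ n) (CARD('a) ^ n) {..<CARD('a) ^ n} ns_code = 0"
  unfolding err1_eq_event_prob err2_eq_event_prob
  by (rule event_prob_bc_chan_eq_0I; auto simp: ns_code_def ns_tx_rx2_def dec_enc ns_guess_rx2_output)+

end

lemma ex_ns_zero_error_code_bc_chan:
  "\<exists>P. ns_box n (CARD('a::{field,finite}) ^ n) (CARD('a) ^ n) {..<CARD('a) ^ n} P \<and>
     err1 (bc_chan :: ('a \<times> 'a, 'a \<times> 'a, 'a \<times> 'a) chan) n (CARD('a) ^ n) (CARD('a) ^ n) {..<CARD('a) ^ n} P = 0 \<and>
     err2 (bc_chan :: ('a \<times> 'a, 'a \<times> 'a, 'a \<times> 'a) chan) n (CARD('a) ^ n) (CARD('a) ^ n) {..<CARD('a) ^ n} P = 0"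
proof -
  obtain enc :: "nat \<Rightarrow> 'a list" and dec where coding:
    "\<And>w. w < CARD('a) ^ n \<Longrightarrow> enc w \<in> seqs n" "\<And>w. w < CARD('a) ^ n \<Longrightarrow> dec (enc w) = w"
    "\<And>x. x \<in> seqs n \<Longrightarrow> dec x < CARD('a) ^ n" "\<And>x. x \<in> seqs n \<Longrightarrow> enc (dec x) = x"
    by (rule seqs_coding[where 'a = 'a and n = n]) blast
  show ?thesis
    using ns_box_ns_code[OF coding] ns_code_zero_error[OF coding] by blast
qed

lemma rx2_output_time_sharing:
  fixes c1 :: "('a::field \<times> 'a) list" and c2 :: "'a list"
  assumes "length c1 = k" "length c2 = k" "G \<in> gains (2 * k + j)"
  shows "take k (drop k (map fst (rx2_output G (c1 @ map (Pair 0) c2 @ replicate j (0, 0))))) = c2"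
  using assms by (intro nth_equalityI) (auto simp: rx2_output_def gains_def nth_append)

context
  fixes k n :: nat and enc1 :: "nat \<Rightarrow> ('a::{field,finite} \<times> 'a) list" and dec1 :: "('a \<times> 'a) list \<Rightarrow> nat"
    and enc2 :: "nat \<Rightarrow> 'a list" and dec2 :: "'a list \<Rightarrow> nat"
  assumes kn: "2 * k \<le> n"
    and enc1: "\<And>w. w < CARD('a) ^ (2 * k) \<Longrightarrow> enc1 w \<in> seqs k"
    and dec_enc1: "\<And>w. w < CARD('a) ^ (2 * k) \<Longrightarrow> dec1 (enc1 w) = w"
    and dec1: "\<And>x. x \<in> seqs k \<Longrightarrow> dec1 x < CARD('a) ^ (2 * k)"
    and enc2: "\<And>w. w < CARD('a) ^ k \<Longrightarrow> enc2 w \<in> seqs k"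
    and dec_enc2: "\<And>w. w < CARD('a) ^ k \<Longrightarrow> dec2 (enc2 w) = w"
    and dec2: "\<And>x. x \<in> seqs k \<Longrightarrow> dec2 x < CARD('a) ^ k"
begin

definition ts_codeword :: "nat \<times> nat \<Rightarrow> ('a \<times> 'a) list" where
  "ts_codeword u = enc1 (fst u) @ map (Pair 0) (enc2 (snd u)) @ replicate (n - 2 * k) (0, 0)"

definition ts_code :: "('a \<times> 'a, 'a \<times> 'a, 'a \<times> 'a) box" where
  "ts_code u v1 v2 a b1 b2 = (if a = ts_codeword u then 1 else 0)
    * (if b1 = dec1 (take k v1) then 1 else 0) * (if b2 = dec2 (take k (drop k (map fst v2))) then 1 else 0)"

lemma classical_box_ts_code:
  "classical_box n (CARD('a) ^ (2 * k)) (CARD('a) ^ k) {..<CARD('a) ^ (2 * k)} ts_code"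
  unfolding classical_box_def
proof (intro conjI exI)
  let ?M1 = "CARD('a) ^ (2 * k)"
  show "\<forall>u\<in>msgs ?M1 (CARD('a) ^ k). (\<forall>a\<in>seqs n. 0 \<le> (if a = ts_codeword u then 1 else 0 :: real))
      \<and> (\<Sum>a\<in>seqs n. if a = ts_codeword u then 1 else 0 :: real) = 1"
    using enc1 enc2 kn by (simp add: ts_codeword_def)
  show "\<forall>v\<in>seqs n. (\<forall>b\<in>{..<?M1}. 0 \<le> (if b = dec1 (take k v) then 1 else 0 :: real))
      \<and> (\<Sum>b\<in>{..<?M1}. if b = dec1 (take k v) then 1 else 0 :: real) = 1"
    using dec1 kn by simp
  show "\<forall>v\<in>(seqs n :: ('a \<times> 'a) list set). (\<forall>b\<in>{..<?M1}. 0 \<le> (if b = dec2 (take k (drop k (map fst v))) then 1 else 0 :: real))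
      \<and> (\<Sum>b\<in>{..<?M1}. if b = dec2 (take k (drop k (map fst v))) then 1 else 0 :: real) = 1"
  proof
    fix v :: "('a \<times> 'a) list" assume "v \<in> seqs n"
    moreover have "CARD('a) ^ k \<le> ?M1"
      by (simp add: power_increasing)
    ultimately have "dec2 (take k (drop k (map fst v))) < ?M1"
      using dec2[of "take k (drop k (map fst v))"] kn by simp
    then show "(\<forall>b\<in>{..<?M1}. 0 \<le> (if b = dec2 (take k (drop k (map fst v))) then 1 else 0 :: real))
        \<and> (\<Sum>b\<in>{..<?M1}. if b = dec2 (take k (drop k (map fst v))) then 1 else 0 :: real) = 1"
      by simp
  qed
qed (simp_all add: ts_code_def)

lemma ts_code_zero_error:
  "err1 bc_chan n (CARD('a) ^ (2 * k)) (CARD('a) ^ k) {..<CARD('a) ^ (2 * k)} ts_code = 0"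
  "err2 bc_chan n (CARD('a) ^ (2 * k)) (CARD('a) ^ k) {..<CARD('a) ^ (2 * k)} ts_code = 0"
  unfolding err1_eq_event_prob err2_eq_event_prob
  by (rule event_prob_bc_chan_eq_0I; use enc1 enc2 kn in
      \<open>auto simp: ts_code_def ts_codeword_def dec_enc1 dec_enc2 rx2_output_time_sharing[where j = "n - 2 * k"]\<close>)+

end


lemma ex_classical_zero_error_code_bc_chan:
  assumes "2 * k \<le> n"
  shows "\<exists>P. classical_box n (CARD('a::{field,finite}) ^ (2 * k)) (CARD('a) ^ k) {..<CARD('a) ^ (2 * k)} P \<and>
     err1 (bc_chan :: ('a \<times> 'a, 'a \<times> 'a, 'a \<times> 'a) chan) n (CARD('a) ^ (2 * k)) (CARD('a) ^ k) {..<CARD('a) ^ (2 * k)} P = 0 \<and>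
     err2 (bc_chan :: ('a \<times> 'a, 'a \<times> 'a, 'a \<times> 'a) chan) n (CARD('a) ^ (2 * k)) (CARD('a) ^ k) {..<CARD('a) ^ (2 * k)} P = 0"
proof -
  have "CARD('a \<times> 'a) ^ k = CARD('a) ^ (2 * k)"
    by (simp add: power_mult power2_eq_square)
  then obtain enc1 :: "nat \<Rightarrow> ('a \<times> 'a) list" and dec1 where coding1:
    "\<And>w. w < CARD('a) ^ (2 * k) \<Longrightarrow> enc1 w \<in> seqs k" "\<And>w. w < CARD('a) ^ (2 * k) \<Longrightarrow> dec1 (enc1 w) = w"
    "\<And>x. x \<in> seqs k \<Longrightarrow> dec1 x < CARD('a) ^ (2 * k)"
    using seqs_coding[where 'a = "'a \<times> 'a" and n = k] by metis
  obtain enc2 :: "nat \<Rightarrow> 'a list" and dec2 where coding2: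
    "\<And>w. w < CARD('a) ^ k \<Longrightarrow> enc2 w \<in> seqs k" "\<And>w. w < CARD('a) ^ k \<Longrightarrow> dec2 (enc2 w) = w"
    "\<And>x. x \<in> seqs k \<Longrightarrow> dec2 x < CARD('a) ^ k"
    using seqs_coding[where 'a = 'a and n = k] by metis
  show ?thesis
    using classical_box_ts_code[OF assms coding1 coding2] ts_code_zero_error[OF assms coding1 coding2] by blast
qed

lemma achievable_of_zero_error_codes:
  assumes codes: "\<And>n. \<exists>P. valid n (m1 n) (m2 n) (B n) P \<and>
      err1 W n (m1 n) (m2 n) (B n) P = 0 \<and> err2 W n (m1 n) (m2 n) (B n) P = 0"
    and m: "\<And>n. 1 \<le> m1 n" "\<And>n. 1 \<le> m2 n"
    and R1: "(\<lambda>n. log 2 (real (m1 n)) / real n) \<longlonglongrightarrow> R1"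
    and R2: "(\<lambda>n. log 2 (real (m2 n)) / real n) \<longlonglongrightarrow> R2"
  shows "achievable valid W (R1, R2)"
proof -
  obtain P where P: "\<And>n. valid n (m1 n) (m2 n) (B n) (P n) \<and>
      err1 W n (m1 n) (m2 n) (B n) (P n) = 0 \<and> err2 W n (m1 n) (m2 n) (B n) (P n) = 0"
    using codes by metis
  show ?thesis
    unfolding achievable_def
    by (intro exI[of _ m1] exI[of _ m2] exI[of _ B] exI[of _ P]) (use P m R1 R2 in auto)
qed

lemma achievable_ns_bc_chan:
  "achievable ns_box (bc_chan :: ('a::{field,finite} \<times> 'a, 'a \<times> 'a, 'a \<times> 'a) chan)
    (log 2 (real CARD('a)), log 2 (real CARD('a)))"
proof (rule achievable_of_zero_error_codes[of _ "\<lambda>n. CARD('a) ^ n" "\<lambda>n. CARD('a) ^ n"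
      "\<lambda>n. {..<CARD('a) ^ n}"])
  have "(\<lambda>n. real n / real n) \<longlonglongrightarrow> (1 :: real)"
    by (rule Lim_transform_eventually[OF tendsto_const])
      (use eventually_ge_at_top[of "1 :: nat"] in \<open>eventually_elim, simp\<close>)
  from tendsto_log_power_rate[OF this, of "CARD('a)"]
  show "(\<lambda>n. log 2 (real (CARD('a) ^ n)) / real n) \<longlonglongrightarrow> log 2 (real CARD('a))"
    by simp
  then show "(\<lambda>n. log 2 (real (CARD('a) ^ n)) / real n) \<longlonglongrightarrow> log 2 (real CARD('a))" .
qed (use ex_ns_zero_error_code_bc_chan[where 'a = 'a] in auto)

lemma achievable_classical_bc_chan:
  "achievable classical_box (bc_chan :: ('a::{field,finite} \<times> 'a, 'a \<times> 'a, 'a \<times> 'a) chan)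
    (log 2 (real CARD('a)), log 2 (real CARD('a)) / 2)"
proof (rule achievable_of_zero_error_codes[of _ "\<lambda>n. CARD('a) ^ (2 * (n div 2))" "\<lambda>n. CARD('a) ^ (n div 2)"
      "\<lambda>n. {..<CARD('a) ^ (2 * (n div 2))}"])
  show "(\<lambda>n. log 2 (real (CARD('a) ^ (2 * (n div 2)))) / real n) \<longlonglongrightarrow> log 2 (real CARD('a))"
  proof -
    have "(\<lambda>n. real (2 * (n div 2)) / real n) \<longlonglongrightarrow> 1"
      using tendsto_mult_left[OF tendsto_div_2_rate, of 2] by simp
    then show ?thesis
      using tendsto_log_power_rate[of "\<lambda>n. 2 * (n div 2)" 1 "CARD('a)"] by simp
  qed
  show "(\<lambda>n. log 2 (real (CARD('a) ^ (n div 2))) / real n) \<longlonglongrightarrow> log 2 (real CARD('a)) / 2"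
    using tendsto_log_power_rate[OF tendsto_div_2_rate, of "CARD('a)"] by simp
qed (use ex_classical_zero_error_code_bc_chan[where 'a = 'a] in auto)

section \<open>Converse with non-signalling assistance\<close>

(* Rx-2's input depends on a only through y = lincomb G a, and by non-signalling the distribution
   of its output depends neither on the message nor on Rx-1's input. *)
lemma ns_box_rx2_success_fixed_gain_le:
  fixes P :: "('a::{field,finite} \<times> 'a, 'a \<times> 'a, 'a \<times> 'a) box"
  assumes ns: "ns_box n m1 m2 B P" and u: "u \<in> msgs m1 m2" "u0 \<in> msgs m1 m2"
    and v0: "v0 \<in> seqs n" and G: "G \<in> gains n" and b: "b \<in> B"
  shows "(\<Sum>a\<in>seqs n. \<Sum>b1\<in>B. P u a (rx2_output G a) a b1 b)
    \<le> (\<Sum>y\<in>seqs n. \<Sum>a\<in>seqs n. \<Sum>b1\<in>B. P u0 v0 (zip y G) a b1 b)"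
proof -
  have "(\<Sum>b1\<in>B. P u a (rx2_output G a) a b1 b) = (\<Sum>b1\<in>B. P u v0 (rx2_output G a) a b1 b)"
    if "a \<in> seqs n" for a
    using ns_box_tx_rx2_marginal[OF ns u(1) that v0 rx2_output_in_seqs[OF G that] that b] .
  then have "(\<Sum>a\<in>seqs n. \<Sum>b1\<in>B. P u a (rx2_output G a) a b1 b)
      = (\<Sum>a\<in>seqs n. \<Sum>b1\<in>B. P u v0 (zip (lincomb G a) G) a b1 b)"
    unfolding rx2_output_def by (rule sum.cong[OF refl])
  also have "\<dots> \<le> (\<Sum>y\<in>seqs n. \<Sum>a\<in>seqs n. \<Sum>b1\<in>B. P u v0 (zip y G) a b1 b)"
    using ns_box_imp_cond_pmf_box[OF ns] u v0 G b
    by (intro sum_comp_le_sum_sum[where f = "lincomb G"] sum_nonneg)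
      (auto simp: cond_pmf_box_def gains_def)
  also have "\<dots> = (\<Sum>y\<in>seqs n. \<Sum>a\<in>seqs n. \<Sum>b1\<in>B. P u0 v0 (zip y G) a b1 b)"
    using G v0 by (intro sum.cong refl ns_box_rx2_marginal[OF ns u v0 v0 _ b]) (simp add: gains_def)
  finally show ?thesis .
qed

lemma ns_box_bc_chan_success2_le:
  fixes P :: "('a::{field,finite} \<times> 'a, 'a \<times> 'a, 'a \<times> 'a) box"
  assumes ns: "ns_box n m1 m2 B P" and m: "1 \<le> m1" "1 \<le> m2"
  shows "event_prob bc_chan n m1 m2 B P (\<lambda>u b1 b2. b2 = snd u) \<le> real CARD('a) ^ n / real m2"
proof -
  let ?\<gamma> = "real (card (gains n :: 'a list set))" and ?v0 = "replicate n undefined :: ('a \<times> 'a) list"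
  define Y where "Y w v = (if w \<in> B then \<Sum>a\<in>seqs n. \<Sum>b1\<in>B. P (0, 0) ?v0 v a b1 w else 0)" for w v
  have u0: "(0, 0) \<in> msgs m1 m2"
    using m by simp
  have "(\<Sum>b1\<in>B. \<Sum>b2\<in>B. if b2 = w2 then P (w1, w2) a v a b1 b2 else 0)
      = (if w2 \<in> B then \<Sum>b1\<in>B. P (w1, w2) a v a b1 w2 else 0)" for w1 w2 a v
    using ns_box_imp_cond_pmf_box[OF ns] by (cases "w2 \<in> B") (simp_all add: cond_pmf_box_def)
  then have "(\<Sum>w1<m1. \<Sum>w2<m2. \<Sum>a\<in>seqs n. \<Sum>G\<in>gains n. \<Sum>b1\<in>B. \<Sum>b2\<in>B.
        if b2 = w2 then P (w1, w2) a (rx2_output G a) a b1 b2 else 0)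
      = (\<Sum>w1<m1. \<Sum>w2<m2. \<Sum>G\<in>gains n. \<Sum>a\<in>seqs n. if w2 \<in> B then \<Sum>b1\<in>B. P (w1, w2) a (rx2_output G a) a b1 w2 else 0)"
    by (simp add: sum.swap[of _ "seqs n" "gains n"])
  also have "\<dots> \<le> (\<Sum>w1<m1. \<Sum>w2<m2. \<Sum>G\<in>gains n. \<Sum>y\<in>seqs n. Y w2 (zip y G))"
  proof (intro sum_mono)
    fix w1 w2 and G :: "'a list" assume "w1 \<in> {..<m1}" "w2 \<in> {..<m2}" "G \<in> gains n"
    then show "(\<Sum>a\<in>seqs n. if w2 \<in> B then \<Sum>b1\<in>B. P (w1, w2) a (rx2_output G a) a b1 w2 else 0)
        \<le> (\<Sum>y\<in>seqs n. Y w2 (zip y G))"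
      using ns_box_rx2_success_fixed_gain_le[OF ns _ u0] by (cases "w2 \<in> B") (simp_all add: Y_def)
  qed
  also have "\<dots> = (\<Sum>w1<m1. \<Sum>G\<in>gains n. \<Sum>y\<in>seqs n. \<Sum>w2<m2. Y w2 (zip y G))"
    by (simp only: sum.swap[of _ "{..<m2}" "gains n"] sum.swap[of _ "{..<m2}" "seqs n"])
  also have "\<dots> \<le> (\<Sum>w1<m1. \<Sum>G\<in>(gains n :: 'a list set). \<Sum>y\<in>(seqs n :: 'a list set). 1)"
    unfolding Y_def
    by (intro sum_mono cond_pmf_box_rx2_marginal_sum_le[OF ns_box_imp_cond_pmf_box[OF ns] u0])
      (simp_all add: gains_def)
  finally have "(\<Sum>w1<m1. \<Sum>w2<m2. \<Sum>a\<in>seqs n. \<Sum>G\<in>gains n. \<Sum>b1\<in>B. \<Sum>b2\<in>B.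
        if b2 = w2 then P (w1, w2) a (rx2_output G a) a b1 b2 else 0) \<le> real m1 * ?\<gamma> * real CARD('a) ^ n"
    by (simp add: card_seqs)
  then show ?thesis
    unfolding event_prob_bc_chan using m card_gains_pos[where 'a = 'a, of n]
    by (simp add: field_simps)
qed

lemma ns_box_bc_chan_err2_ge:
  fixes P :: "('a::{field,finite} \<times> 'a, 'a \<times> 'a, 'a \<times> 'a) box"
  assumes "ns_box n m1 m2 B P" "1 \<le> m1" "1 \<le> m2"
  shows "1 - real CARD('a) ^ n / real m2 \<le> err2 bc_chan n m1 m2 B P"
  using err2_bc_chan_eq_compl[OF assms] ns_box_bc_chan_success2_le[OF assms] by simp

lemma ns_box_bc_chan_size_bound:
  fixes P :: "('a::{field,finite} \<times> 'a, 'a \<times> 'a, 'a \<times> 'a) box"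
  assumes "ns_box n m1 m2 B P" "1 \<le> m1" "1 \<le> m2" and "err2 bc_chan n m1 m2 B P < 1 / 2"
  shows "real m2 < 2 * real CARD('a) ^ n"
proof -
  have "1 / 2 < real CARD('a) ^ n / real m2"
    using ns_box_bc_chan_err2_ge[OF assms(1-3)] assms(4) by linarith
  then show ?thesis
    using assms(3) by (simp add: field_simps)
qed

lemma achievable_ns_bc_chan_rate2_le:
  assumes "achievable ns_box (bc_chan :: ('a::{field,finite} \<times> 'a, 'a \<times> 'a, 'a \<times> 'a) chan) R"
  shows "snd R \<le> log 2 (real CARD('a))"
proof -
  obtain m1 m2 :: "nat \<Rightarrow> nat" and B :: "nat \<Rightarrow> nat set"
    and P :: "nat \<Rightarrow> ('a \<times> 'a, 'a \<times> 'a, 'a \<times> 'a) box" and L2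
    where m: "\<And>n. 1 \<le> m1 n" "\<And>n. 1 \<le> m2 n" and ns: "\<And>n. ns_box n (m1 n) (m2 n) (B n) (P n)"
      and err: "(\<lambda>n. max (err1 bc_chan n (m1 n) (m2 n) (B n) (P n)) (err2 bc_chan n (m1 n) (m2 n) (B n) (P n)))
        \<longlonglongrightarrow> 0"
      and L2: "(\<lambda>n. log 2 (real (m2 n)) / real n) \<longlonglongrightarrow> L2" "snd R \<le> L2"
    using assms unfolding achievable_def by blast
  have small: "\<forall>\<^sub>F n in sequentially.
      max (err1 bc_chan n (m1 n) (m2 n) (B n) (P n)) (err2 bc_chan n (m1 n) (m2 n) (B n) (P n)) < 1 / 2"
    by (rule order_tendstoD(2)[OF err]) simp
  have "\<forall>\<^sub>F n in sequentially. log 2 (real (m2 n)) / real n \<le> log 2 (real CARD('a)) + 1 / real n"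
    using small eventually_ge_at_top[of "1 :: nat"]
  proof eventually_elim
    case (elim n)
    then have "real (m2 n) < 2 * real CARD('a) ^ n"
      by (intro ns_box_bc_chan_size_bound[OF ns m(1,2)]) simp
    then show ?case
      using log2_div_le_of_less_pow[of "real (m2 n)" 1 "real CARD('a)" n] m(2)[of n] elim(2) by simp
  qed
  then have "L2 \<le> log 2 (real CARD('a))"
    by (rule limit_le_of_eventually_le[OF L2(1)])
  with L2(2) show ?thesis
    by simp
qed

section \<open>Classical converse\<close>

lemma sum_decoder_gain_average_le:
  fixes c :: "nat \<Rightarrow> ('a::{field,finite} \<times> 'a) list \<Rightarrow> real"
  assumes c_sum: "\<And>v. v \<in> seqs n \<Longrightarrow> (\<Sum>w<m. c w v) \<le> 1"
  shows "(\<Sum>w<m. (\<Sum>G\<in>gains n. \<Sum>y\<in>seqs n. c w (zip y G)) / real (card (gains n :: 'a list set)))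
    \<le> real CARD('a) ^ n"
proof -
  let ?\<gamma> = "real (card (gains n :: 'a list set))"
  have "(\<Sum>w<m. (\<Sum>G\<in>gains n. \<Sum>y\<in>seqs n. c w (zip y G)) / ?\<gamma>)
      = (\<Sum>G\<in>gains n. \<Sum>y\<in>seqs n. \<Sum>w<m. c w (zip y G)) / ?\<gamma>"
    unfolding sum_divide_distrib[symmetric]
    by (simp only: sum.swap[of _ "{..<m}" "gains n"] sum.swap[of _ "{..<m}" "seqs n"])
  also have "\<dots> \<le> (\<Sum>G\<in>(gains n :: 'a list set). \<Sum>y\<in>(seqs n :: 'a list set). 1) / ?\<gamma>"
    using card_gains_pos[where 'a = 'a, of n]
    by (intro divide_right_mono sum_mono c_sum) (simp_all add: gains_def)
  also have "\<dots> = real CARD('a) ^ n"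
    using card_gains_pos[where 'a = 'a, of n] by (simp add: card_seqs)
  finally show ?thesis .
qed

(* The projections for the gains G and k G together determine the input (inj_on_lincomb_pair), so
   few inputs are heavy for both; pairing G with k G therefore halves the heavy mass. *)
lemma rx2_success_le:
  fixes p c :: "('a::{field,finite} \<times> 'a) list \<Rightarrow> real"
  assumes q: "2 < CARD('a)" and l: "0 < l" and m: "0 < m"
    and p_nonneg: "\<And>a. a \<in> seqs n \<Longrightarrow> 0 \<le> p a" and p_sum: "sum p (seqs n) = 1"
    and spread: "\<And>S. S \<subseteq> seqs n \<Longrightarrow> sum p S \<le> real (card S) / m + \<epsilon>"
    and c: "\<And>v. v \<in> seqs n \<Longrightarrow> 0 \<le> c v \<and> c v \<le> 1"
  shows "(\<Sum>G\<in>gains n. \<Sum>a\<in>seqs n. p a * c (rx2_output G a)) / real (card (gains n :: 'a list set))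
    \<le> (1 + 1 / (l\<^sup>2 * m) + \<epsilon>) / 2
      + l * ((\<Sum>G\<in>gains n. \<Sum>y\<in>seqs n. c (zip y G)) / real (card (gains n :: 'a list set)))"
proof -
  let ?\<gamma> = "real (card (gains n :: 'a list set))"
  define H where "H G = {a \<in> seqs n. lincomb G a \<in> heavy_values p (seqs n) (lincomb G) l}" for G
  define \<kappa> where "\<kappa> = 1 + 1 / (l\<^sup>2 * m) + \<epsilon>"
  obtain k :: 'a where k: "k \<noteq> 0" "k \<noteq> 1"
    using obtain_ne_0_1[OF q] by blast
  have light_heavy: "(\<Sum>a\<in>seqs n. p a * c (rx2_output G a)) \<le> sum p (H G) + l * (\<Sum>y\<in>seqs n. c (zip y G))"
    if "G \<in> gains n" for G
  proof -
    have "(\<Sum>a\<in>seqs n. p a * c (rx2_output G a))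
        \<le> sum p (H G) + l * (\<Sum>y\<in>lincomb G ` seqs n. c (zip y G))"
      unfolding rx2_output_def H_def using p_nonneg c that l
      by (intro sum_mult_comp_le_heavy_light) (auto simp: gains_def)
    also have "(\<Sum>y\<in>lincomb G ` seqs n. c (zip y G)) \<le> (\<Sum>y\<in>seqs n. c (zip y G))"
      using c that by (intro sum_mono2) (auto simp: gains_def)
    finally show ?thesis
      using l by (simp add: mult_left_mono)
  qed
  have "(\<Sum>G\<in>gains n. sum p (H (map ((*) k) G))) = (\<Sum>G\<in>gains n. sum p (H G))"
    using bij_betw_scale_gains[OF k(1)] by (rule sum.reindex_bij_betw)
  then have "2 * (\<Sum>G\<in>gains n. sum p (H G)) = (\<Sum>G\<in>gains n. sum p (H G) + sum p (H (map ((*) k) G)))"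
    by (simp add: sum.distrib)
  also have "\<dots> \<le> (\<Sum>G\<in>(gains n :: 'a list set). \<kappa>)"
    unfolding H_def \<kappa>_def using p_nonneg p_sum spread l m k
    by (intro sum_mono heavy_pair_mass_le inj_on_lincomb_pair) (auto simp: in_gains)
  finally have heavy: "(\<Sum>G\<in>gains n. sum p (H G)) / ?\<gamma> \<le> \<kappa> / 2"
    using card_gains_pos[where 'a = 'a, of n] by (simp add: pos_divide_le_eq mult.commute)
  have "(\<Sum>G\<in>gains n. \<Sum>a\<in>seqs n. p a * c (rx2_output G a))
      \<le> (\<Sum>G\<in>gains n. sum p (H G)) + l * (\<Sum>G\<in>gains n. \<Sum>y\<in>seqs n. c (zip y G))"
    using light_heavy by (simp add: sum_distrib_left sum_mono flip: sum.distrib)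
  then have "(\<Sum>G\<in>gains n. \<Sum>a\<in>seqs n. p a * c (rx2_output G a)) / ?\<gamma>
      \<le> ((\<Sum>G\<in>gains n. sum p (H G)) + l * (\<Sum>G\<in>gains n. \<Sum>y\<in>seqs n. c (zip y G))) / ?\<gamma>"
    by (intro divide_right_mono) simp_all
  also have "\<dots> = (\<Sum>G\<in>gains n. sum p (H G)) / ?\<gamma> + l * ((\<Sum>G\<in>gains n. \<Sum>y\<in>seqs n. c (zip y G)) / ?\<gamma>)"
    by (simp add: add_divide_distrib)
  finally have "(\<Sum>G\<in>gains n. \<Sum>a\<in>seqs n. p a * c (rx2_output G a)) / ?\<gamma>
      \<le> (\<Sum>G\<in>gains n. sum p (H G)) / ?\<gamma> + l * ((\<Sum>G\<in>gains n. \<Sum>y\<in>seqs n. c (zip y G)) / ?\<gamma>)" .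
  then show ?thesis
    using heavy unfolding \<kappa>_def by linarith
qed

lemma codebook_rx2_success_le:
  fixes E c1 :: "nat \<Rightarrow> ('a::{field,finite} \<times> 'a) list \<Rightarrow> real" and c :: "('a \<times> 'a) list \<Rightarrow> real"
  assumes q: "2 < CARD('a)" and l: "0 < l" and m: "1 \<le> m"
    and E_nonneg: "\<And>w a. w < m \<Longrightarrow> a \<in> seqs n \<Longrightarrow> 0 \<le> E w a"
    and E_sum: "\<And>w. w < m \<Longrightarrow> sum (E w) (seqs n) = 1"
    and c1_nonneg: "\<And>w a. a \<in> seqs n \<Longrightarrow> 0 \<le> c1 w a"
    and c1_sum: "\<And>a. a \<in> seqs n \<Longrightarrow> (\<Sum>w<m. c1 w a) \<le> 1"
    and c: "\<And>v. v \<in> seqs n \<Longrightarrow> 0 \<le> c v \<and> c v \<le> 1"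
  shows "(\<Sum>G\<in>gains n. \<Sum>a\<in>seqs n. (\<Sum>w<m. E w a) / real m * c (rx2_output G a))
      / real (card (gains n :: 'a list set))
    \<le> (2 + 1 / (l\<^sup>2 * real m) - (\<Sum>w<m. \<Sum>a\<in>seqs n. E w a * c1 w a) / real m) / 2
      + l * ((\<Sum>G\<in>gains n. \<Sum>y\<in>seqs n. c (zip y G)) / real (card (gains n :: 'a list set)))"
proof -
  have m_pos: "0 < real m"
    using m by simp
  let ?s1 = "(\<Sum>w<m. \<Sum>a\<in>seqs n. E w a * c1 w a) / real m"
  have "(\<Sum>G\<in>gains n. \<Sum>a\<in>seqs n. (\<Sum>w<m. E w a) / real m * c (rx2_output G a))
      / real (card (gains n :: 'a list set))
    \<le> (1 + 1 / (l\<^sup>2 * real m) + (1 - ?s1)) / 2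
      + l * ((\<Sum>G\<in>gains n. \<Sum>y\<in>seqs n. c (zip y G)) / real (card (gains n :: 'a list set)))"
  proof (rule rx2_success_le[OF q l m_pos _ _ _ c])
    show "0 \<le> (\<Sum>w<m. E w a) / real m" if "a \<in> seqs n" for a
      using E_nonneg that by (intro divide_nonneg_nonneg sum_nonneg) auto
    have "(\<Sum>a\<in>seqs n. \<Sum>w<m. E w a) = (\<Sum>w<m. sum (E w) (seqs n))"
      by (rule sum.swap)
    then show "(\<Sum>a\<in>seqs n. (\<Sum>w<m. E w a) / real m) = 1"
      using E_sum m_pos by (simp flip: sum_divide_distrib)
    show "(\<Sum>a\<in>S. (\<Sum>w<m. E w a) / real m) \<le> real (card S) / real m + (1 - ?s1)" if "S \<subseteq> seqs n" for S
    proof -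
      have "(\<Sum>a\<in>S. \<Sum>w<m. E w a) \<le> real (card S) + real m - (\<Sum>w<m. \<Sum>a\<in>seqs n. E w a * c1 w a)"
        using that E_nonneg E_sum c1_nonneg c1_sum by (intro codebook_mass_le) auto
      then show ?thesis
        using m_pos by (simp add: field_simps flip: sum_divide_distrib)
    qed
  qed
  then show ?thesis
    by (simp add: diff_divide_distrib add_divide_distrib)
qed

lemma classical_success_bound:
  fixes E :: "nat \<times> nat \<Rightarrow> ('a::{field,finite} \<times> 'a) list \<Rightarrow> real"
    and c1 c2 :: "nat \<Rightarrow> ('a \<times> 'a) list \<Rightarrow> real"
  assumes q: "2 < CARD('a)" and l: "0 < l" and m: "1 \<le> m1" "1 \<le> m2"
    and E_nonneg: "\<And>w1 w2 a. w1 < m1 \<Longrightarrow> w2 < m2 \<Longrightarrow> a \<in> seqs n \<Longrightarrow> 0 \<le> E (w1, w2) a"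
    and E_sum: "\<And>w1 w2. w1 < m1 \<Longrightarrow> w2 < m2 \<Longrightarrow> sum (E (w1, w2)) (seqs n) = 1"
    and c1_nonneg: "\<And>w a. a \<in> seqs n \<Longrightarrow> 0 \<le> c1 w a"
    and c1_sum: "\<And>a. a \<in> seqs n \<Longrightarrow> (\<Sum>w<m1. c1 w a) \<le> 1"
    and c2_nonneg: "\<And>w v. v \<in> seqs n \<Longrightarrow> 0 \<le> c2 w v"
    and c2_sum: "\<And>v. v \<in> seqs n \<Longrightarrow> (\<Sum>w<m2. c2 w v) \<le> 1"
  shows "(\<Sum>w1<m1. \<Sum>w2<m2. \<Sum>a\<in>seqs n. E (w1, w2) a * c1 w1 a) / (real m1 * real m2)
      + 2 * ((\<Sum>w1<m1. \<Sum>w2<m2. \<Sum>a\<in>seqs n. \<Sum>G\<in>gains n. E (w1, w2) a * c2 w2 (rx2_output G a))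
             / (real m1 * real m2 * real (card (gains n :: 'a list set))))
    \<le> 2 + 1 / (l\<^sup>2 * real m1) + 2 * l * real CARD('a) ^ n / real m2"
proof -
  let ?\<gamma> = "real (card (gains n :: 'a list set))"
  define s1 where "s1 w2 = (\<Sum>w1<m1. \<Sum>a\<in>seqs n. E (w1, w2) a * c1 w1 a) / real m1" for w2
  define s2 where "s2 w2 = (\<Sum>G\<in>gains n. \<Sum>a\<in>seqs n. (\<Sum>w1<m1. E (w1, w2) a) / real m1 * c2 w2 (rx2_output G a)) / ?\<gamma>"
    for w2
  define t where "t w2 = (\<Sum>G\<in>gains n. \<Sum>y\<in>seqs n. c2 w2 (zip y G)) / ?\<gamma>" for w2
  define K where "K = (2 + 1 / (l\<^sup>2 * real m1)) / 2"
  have m_pos: "0 < real m1" "0 < real m2" and \<gamma>_pos: "0 < ?\<gamma>"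
    using m card_gains_pos[where 'a = 'a, of n] by simp_all
  have s2_le: "s2 w2 \<le> K - s1 w2 / 2 + l * t w2" if "w2 < m2" for w2
  proof -
    have "0 \<le> c2 w2 v \<and> c2 w2 v \<le> 1" if "v \<in> seqs n" for v
      using c2_nonneg[OF that] c2_sum[OF that] member_le_sum[of w2 "{..<m2}" "\<lambda>w. c2 w v"] \<open>w2 < m2\<close> that
      by auto
    then have "s2 w2 \<le> (2 + 1 / (l\<^sup>2 * real m1) - s1 w2) / 2 + l * t w2"
      unfolding s1_def s2_def t_def
      by (intro codebook_rx2_success_le[OF q l m(1)]) (use E_nonneg E_sum c1_nonneg c1_sum that in auto)
    then show ?thesis
      by (simp add: K_def diff_divide_distrib)
  qed
  have t_sum: "(\<Sum>w2<m2. t w2) \<le> real CARD('a) ^ n"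
    unfolding t_def using c2_sum by (rule sum_decoder_gain_average_le)
  have S1: "(\<Sum>w1<m1. \<Sum>w2<m2. \<Sum>a\<in>seqs n. E (w1, w2) a * c1 w1 a) / (real m1 * real m2)
      = (\<Sum>w2<m2. s1 w2) / real m2"
    by (simp add: s1_def sum.swap[of _ "{..<m1}" "{..<m2}"] sum_divide_distrib[symmetric])
  have "(\<Sum>w1<m1. \<Sum>w2<m2. \<Sum>a\<in>seqs n. \<Sum>G\<in>gains n. E (w1, w2) a * c2 w2 (rx2_output G a))
      = (\<Sum>w2<m2. \<Sum>G\<in>gains n. \<Sum>a\<in>seqs n. \<Sum>w1<m1. E (w1, w2) a * c2 w2 (rx2_output G a))"
    by (simp only: sum.swap[of _ "{..<m1}"] sum.swap[of _ "seqs n" "gains n"])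
  also have "\<dots> = real m1 * ?\<gamma> * (\<Sum>w2<m2. s2 w2)"
    using m_pos \<gamma>_pos by (simp add: s2_def sum_distrib_left sum_distrib_right sum_divide_distrib)
  finally have S2: "(\<Sum>w1<m1. \<Sum>w2<m2. \<Sum>a\<in>seqs n. \<Sum>G\<in>gains n. E (w1, w2) a * c2 w2 (rx2_output G a))
      / (real m1 * real m2 * ?\<gamma>) = (\<Sum>w2<m2. s2 w2) / real m2"
    using m_pos \<gamma>_pos by simp
  have "(\<Sum>w2<m2. s2 w2) \<le> (\<Sum>w2<m2. K - s1 w2 / 2 + l * t w2)"
    using s2_le by (intro sum_mono) simp
  also have "\<dots> = real m2 * K - (\<Sum>w2<m2. s1 w2) / 2 + l * (\<Sum>w2<m2. t w2)"
    by (simp add: sum.distrib sum_subtractf sum_divide_distrib sum_distrib_left)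
  finally have "(\<Sum>w2<m2. s1 w2) + 2 * (\<Sum>w2<m2. s2 w2) \<le> 2 * (real m2 * K) + 2 * (l * real CARD('a) ^ n)"
    using mult_left_mono[OF t_sum less_imp_le[OF l]] by linarith
  then have "((\<Sum>w2<m2. s1 w2) + 2 * (\<Sum>w2<m2. s2 w2)) / real m2
      \<le> (2 * (real m2 * K) + 2 * (l * real CARD('a) ^ n)) / real m2"
    using m_pos by (intro divide_right_mono) simp_all
  then show ?thesis
    unfolding S1 S2 using m_pos by (simp add: K_def add_divide_distrib)
qed

lemma product_box_bc_chan_err1:
  fixes P :: "('a::{field,finite} \<times> 'a, 'a \<times> 'a, 'a \<times> 'a) box"
  assumes cb: "classical_box n m1 m2 B P" and m: "1 \<le> m1" "1 \<le> m2"
    and P_eq: "\<And>u v1 v2 a b1 b2. P u v1 v2 a b1 b2 = E u a * D1 v1 b1 * D2 v2 b2"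
    and D2: "\<And>v. v \<in> seqs n \<Longrightarrow> sum (D2 v) B = 1"
  shows "err1 bc_chan n m1 m2 B P
    = 1 - (\<Sum>w1<m1. \<Sum>w2<m2. \<Sum>a\<in>seqs n. E (w1, w2) a * (if w1 \<in> B then D1 a w1 else 0))
          / (real m1 * real m2)"
proof -
  let ?\<gamma> = "real (card (gains n :: 'a list set))"
  have "(\<Sum>G\<in>gains n. \<Sum>b1\<in>B. \<Sum>b2\<in>B. if b1 = w1 then P (w1, w2) a (rx2_output G a) a b1 b2 else 0)
      = ?\<gamma> * (E (w1, w2) a * (if w1 \<in> B then D1 a w1 else 0))" if "a \<in> seqs n" for w1 w2 a
  proof -
    have row: "(\<Sum>b1\<in>B. \<Sum>b2\<in>B. if b1 = w1 then P (w1, w2) a v a b1 b2 else 0)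
        = E (w1, w2) a * (if w1 \<in> B then D1 a w1 else 0)" if "v \<in> seqs n" for v
      using D2[OF that] sum_sum_if_eq_mult(1)[where B = B and w = w1 and f = "\<lambda>b1. E (w1, w2) a * D1 a b1"
          and g = "D2 v"]
      unfolding P_eq by simp
    then have "(\<Sum>G\<in>gains n. \<Sum>b1\<in>B. \<Sum>b2\<in>B. if b1 = w1 then P (w1, w2) a (rx2_output G a) a b1 b2 else 0)
        = (\<Sum>G\<in>(gains n :: 'a list set). E (w1, w2) a * (if w1 \<in> B then D1 a w1 else 0))"
      using \<open>a \<in> seqs n\<close> by (intro sum.cong refl row rx2_output_in_seqs)
    then show ?thesis
      by simp
  qed
  then have "event_prob bc_chan n m1 m2 B P (\<lambda>u b1 b2. b1 = fst u)
      = (\<Sum>w1<m1. \<Sum>w2<m2. \<Sum>a\<in>seqs n. ?\<gamma> * (E (w1, w2) a * (if w1 \<in> B then D1 a w1 else 0)))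
        / (real m1 * real m2 * ?\<gamma>)"
    unfolding event_prob_bc_chan by (intro arg_cong2[where f = "(/)"] sum.cong refl) simp
  also have "\<dots> = (\<Sum>w1<m1. \<Sum>w2<m2. \<Sum>a\<in>seqs n. E (w1, w2) a * (if w1 \<in> B then D1 a w1 else 0))
      / (real m1 * real m2)"
    using card_gains_pos[where 'a = 'a, of n] by (simp add: sum_distrib_left[symmetric])
  finally show ?thesis
    by (simp add: err1_bc_chan_eq_compl[OF classical_box_imp_ns_box[OF cb] m])
qed

lemma product_box_bc_chan_err2:
  fixes P :: "('a::{field,finite} \<times> 'a, 'a \<times> 'a, 'a \<times> 'a) box"
  assumes cb: "classical_box n m1 m2 B P" and m: "1 \<le> m1" "1 \<le> m2"
    and P_eq: "\<And>u v1 v2 a b1 b2. P u v1 v2 a b1 b2 = E u a * D1 v1 b1 * D2 v2 b2"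
    and D1: "\<And>v. v \<in> seqs n \<Longrightarrow> sum (D1 v) B = 1"
  shows "err2 bc_chan n m1 m2 B P
    = 1 - (\<Sum>w1<m1. \<Sum>w2<m2. \<Sum>a\<in>seqs n. \<Sum>G\<in>gains n.
            E (w1, w2) a * (if w2 \<in> B then D2 (rx2_output G a) w2 else 0))
          / (real m1 * real m2 * real (card (gains n :: 'a list set)))"
proof -
  have "(\<Sum>b1\<in>B. \<Sum>b2\<in>B. if b2 = w2 then P (w1, w2) a v a b1 b2 else 0)
      = E (w1, w2) a * (if w2 \<in> B then D2 v w2 else 0)" if "a \<in> seqs n" for w1 w2 a v
    using D1[OF that] sum_sum_if_eq_mult(2)[where B = B and w = w2 and f = "\<lambda>b1. E (w1, w2) a * D1 a b1"
        and g = "D2 v"]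
    unfolding P_eq by (simp flip: sum_distrib_left)
  then have "event_prob bc_chan n m1 m2 B P (\<lambda>u b1 b2. b2 = snd u)
      = (\<Sum>w1<m1. \<Sum>w2<m2. \<Sum>a\<in>seqs n. \<Sum>G\<in>gains n.
           E (w1, w2) a * (if w2 \<in> B then D2 (rx2_output G a) w2 else 0))
        / (real m1 * real m2 * real (card (gains n :: 'a list set)))"
    unfolding event_prob_bc_chan by (intro arg_cong2[where f = "(/)"] sum.cong refl) simp
  then show ?thesis
    by (simp add: err2_bc_chan_eq_compl[OF classical_box_imp_ns_box[OF cb] m])
qed

lemma classical_box_bc_chan_error_bound:
  fixes P :: "('a::{field,finite} \<times> 'a, 'a \<times> 'a, 'a \<times> 'a) box"
  assumes cb: "classical_box n m1 m2 B P" and q: "2 < CARD('a)" and m: "1 \<le> m1" "1 \<le> m2"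
    and l: "0 < l"
  shows "1 \<le> err1 bc_chan n m1 m2 B P + 2 * err2 bc_chan n m1 m2 B P
    + 1 / (l\<^sup>2 * real m1) + 2 * l * real CARD('a) ^ n / real m2"
proof -
  obtain E :: "nat \<times> nat \<Rightarrow> ('a \<times> 'a) list \<Rightarrow> real" and D1 D2 :: "('a \<times> 'a) list \<Rightarrow> nat \<Rightarrow> real"
    where B: "finite B"
      and E: "\<forall>u\<in>msgs m1 m2. (\<forall>a\<in>seqs n. E u a \<ge> 0) \<and> (\<Sum>a\<in>seqs n. E u a) = 1"
      and D1: "\<forall>v\<in>seqs n. (\<forall>b\<in>B. D1 v b \<ge> 0) \<and> (\<Sum>b\<in>B. D1 v b) = 1"
      and D2: "\<forall>v\<in>seqs n. (\<forall>b\<in>B. D2 v b \<ge> 0) \<and> (\<Sum>b\<in>B. D2 v b) = 1"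
      and P_eq: "\<And>u v1 v2 a b1 b2. P u v1 v2 a b1 b2 = E u a * D1 v1 b1 * D2 v2 b2"
    using cb unfolding classical_box_def by blast
  have "(\<Sum>w1<m1. \<Sum>w2<m2. \<Sum>a\<in>seqs n. E (w1, w2) a * (if w1 \<in> B then D1 a w1 else 0)) / (real m1 * real m2)
      + 2 * ((\<Sum>w1<m1. \<Sum>w2<m2. \<Sum>a\<in>seqs n. \<Sum>G\<in>gains n.
                E (w1, w2) a * (if w2 \<in> B then D2 (rx2_output G a) w2 else 0))
             / (real m1 * real m2 * real (card (gains n :: 'a list set))))
    \<le> 2 + 1 / (l\<^sup>2 * real m1) + 2 * l * real CARD('a) ^ n / real m2"
  proof (rule classical_success_bound[OF q l m])
    show "(\<Sum>w<m1. if w \<in> B then D1 a w else 0) \<le> 1" if "a \<in> seqs n" for a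
      using B D1 that sum_if_mem_le[of "{..<m1}" B "D1 a"] by simp
    show "(\<Sum>w<m2. if w \<in> B then D2 v w else 0) \<le> 1" if "v \<in> seqs n" for v
      using B D2 that sum_if_mem_le[of "{..<m2}" B "D2 v"] by simp
  qed (use E D1 D2 in simp_all)
  then show ?thesis
    using product_box_bc_chan_err1[OF cb m P_eq] product_box_bc_chan_err2[OF cb m P_eq] D1 D2 by simp
qed

lemma classical_box_bc_chan_size_bound:
  fixes P :: "('a::{field,finite} \<times> 'a, 'a \<times> 'a, 'a \<times> 'a) box"
  assumes cb: "classical_box n m1 m2 B P" and q: "2 < CARD('a)" and m: "1 \<le> m1" "1 \<le> m2"
    and err: "err1 bc_chan n m1 m2 B P < 1 / 8" "err2 bc_chan n m1 m2 B P < 1 / 8"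
  shows "sqrt (real m1) * real m2 < 16 * real CARD('a) ^ n"
proof -
  define l where "l = 2 / sqrt (real m1)"
  have l: "0 < l" and l2: "1 / (l\<^sup>2 * real m1) = 1 / 4"
    using m by (simp_all add: l_def power_divide)
  have "1 \<le> 3 / 8 + 1 / 4 + 2 * l * real CARD('a) ^ n / real m2"
    using classical_box_bc_chan_error_bound[OF cb q m l] err l2 by simp
  also have "2 * l * real CARD('a) ^ n / real m2 = 4 * real CARD('a) ^ n / (sqrt (real m1) * real m2)"
    by (simp add: l_def)
  finally have "3 * (sqrt (real m1) * real m2) \<le> 32 * real CARD('a) ^ n"
    using m by (simp add: field_simps)
  moreover have "0 < real CARD('a) ^ n"
    by simp
  ultimately show ?thesis
    by linarith
qed

lemma achievable_classical_bc_chan_rates_le: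
  assumes q: "2 < CARD('a::{field,finite})"
    and "achievable classical_box (bc_chan :: ('a \<times> 'a, 'a \<times> 'a, 'a \<times> 'a) chan) R"
  shows "fst R / 2 + snd R \<le> log 2 (real CARD('a))"
proof -
  obtain m1 m2 :: "nat \<Rightarrow> nat" and B :: "nat \<Rightarrow> nat set"
    and P :: "nat \<Rightarrow> ('a \<times> 'a, 'a \<times> 'a, 'a \<times> 'a) box" and L1 L2
    where m: "\<And>n. 1 \<le> m1 n" "\<And>n. 1 \<le> m2 n" and cb: "\<And>n. classical_box n (m1 n) (m2 n) (B n) (P n)"
      and err: "(\<lambda>n. max (err1 bc_chan n (m1 n) (m2 n) (B n) (P n)) (err2 bc_chan n (m1 n) (m2 n) (B n) (P n)))
        \<longlonglongrightarrow> 0"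
      and L1: "(\<lambda>n. log 2 (real (m1 n)) / real n) \<longlonglongrightarrow> L1" "fst R \<le> L1"
      and L2: "(\<lambda>n. log 2 (real (m2 n)) / real n) \<longlonglongrightarrow> L2" "snd R \<le> L2"
    using assms(2) unfolding achievable_def by blast
  have small: "\<forall>\<^sub>F n in sequentially.
      max (err1 bc_chan n (m1 n) (m2 n) (B n) (P n)) (err2 bc_chan n (m1 n) (m2 n) (B n) (P n)) < 1 / 8"
    by (rule order_tendstoD(2)[OF err]) simp
  have "\<forall>\<^sub>F n in sequentially.
      (log 2 (real (m1 n)) / real n) / 2 + log 2 (real (m2 n)) / real n \<le> log 2 (real CARD('a)) + 4 / real n"
    using small eventually_ge_at_top[of "1 :: nat"]
  proof eventually_elim
    case (elim n)
    have "sqrt (real (m1 n)) * real (m2 n) < 16 * real CARD('a) ^ n"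
      using elim(1) by (intro classical_box_bc_chan_size_bound[OF cb q m(1,2)]) simp_all
    then have "log 2 (sqrt (real (m1 n)) * real (m2 n)) / real n \<le> log 2 (real CARD('a)) + 4 / real n"
      using log2_div_le_of_less_pow[of "sqrt (real (m1 n)) * real (m2 n)" 4 "real CARD('a)" n] m[of n] elim(2) by simp
    moreover have "log 2 (sqrt (real (m1 n)) * real (m2 n)) = log 2 (real (m1 n)) / 2 + log 2 (real (m2 n))"
      using m[of n] by (simp add: log_mult sqrt_def log_root)
    ultimately show ?case
      by (simp add: add_divide_distrib)
  qed
  moreover have "(\<lambda>n. (log 2 (real (m1 n)) / real n) / 2 + log 2 (real (m2 n)) / real n) \<longlonglongrightarrow> L1 / 2 + L2"
    by (intro tendsto_intros L1(1) L2(1)) simp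
  ultimately have "L1 / 2 + L2 \<le> log 2 (real CARD('a))"
    using limit_le_of_eventually_le by blast
  with L1(2) L2(2) show ?thesis
    by simp
qed

lemma capacity_region_NS_bc_chan_subset:
  "capacity_region_NS (bc_chan :: ('a::{field,finite} \<times> 'a, 'a \<times> 'a, 'a \<times> 'a) chan)
    \<subseteq> {R. snd R \<le> log 2 (real CARD('a))}"
  unfolding capacity_region_NS_def
proof (rule closure_minimal)
  show "closed {R :: real \<times> real. snd R \<le> log 2 (real CARD('a))}"
    by (intro closed_Collect_le continuous_intros)
qed (auto intro: achievable_ns_bc_chan_rate2_le)

lemma capacity_region_bc_chan_subset:
  assumes "2 < CARD('a::{field,finite})"
  shows "capacity_region (bc_chan :: ('a \<times> 'a, 'a \<times> 'a, 'a \<times> 'a) chan)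
    \<subseteq> {R. fst R / 2 + snd R \<le> log 2 (real CARD('a))}"
  unfolding capacity_region_def
proof (rule closure_minimal)
  show "closed {R :: real \<times> real. fst R / 2 + snd R \<le> log 2 (real CARD('a))}"
    by (intro closed_Collect_le continuous_intros) simp
qed (auto intro: achievable_classical_bc_chan_rates_le[OF assms])

theorem theorem5:
  assumes "CARD('a::{field,finite}) > 2"
  shows "((log 2 (real CARD('a)), log 2 (real CARD('a)))
            \<in> capacity_region_NS (bc_chan :: ('a \<times> 'a, 'a \<times> 'a, 'a \<times> 'a) chan) \<and>
          (\<forall>R2. (log 2 (real CARD('a)), R2) \<in> capacity_region_NS (bc_chan :: ('a \<times> 'a, 'a \<times> 'a, 'a \<times> 'a) chan)
              \<longrightarrow> R2 \<le> log 2 (real CARD('a))))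
       \<and> ((log 2 (real CARD('a)), log 2 (real CARD('a)) / 2)
            \<in> capacity_region (bc_chan :: ('a \<times> 'a, 'a \<times> 'a, 'a \<times> 'a) chan) \<and>
          (\<forall>R2. (log 2 (real CARD('a)), R2) \<in> capacity_region (bc_chan :: ('a \<times> 'a, 'a \<times> 'a, 'a \<times> 'a) chan)
              \<longrightarrow> R2 \<le> log 2 (real CARD('a)) / 2))"
proof -
  let ?q = "log 2 (real CARD('a))"
  have "(?q, ?q) \<in> capacity_region_NS (bc_chan :: ('a \<times> 'a, 'a \<times> 'a, 'a \<times> 'a) chan)"
    using achievable_ns_bc_chan closure_subset unfolding capacity_region_NS_def by blast
  moreover have "(?q, ?q / 2) \<in> capacity_region (bc_chan :: ('a \<times> 'a, 'a \<times> 'a, 'a \<times> 'a) chan)"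
    using achievable_classical_bc_chan closure_subset unfolding capacity_region_def by blast
  moreover have "R2 \<le> ?q"
    if "(?q, R2) \<in> capacity_region_NS (bc_chan :: ('a \<times> 'a, 'a \<times> 'a, 'a \<times> 'a) chan)" for R2
    using that capacity_region_NS_bc_chan_subset by fastforce
  moreover have "R2 \<le> ?q / 2"
    if "(?q, R2) \<in> capacity_region (bc_chan :: ('a \<times> 'a, 'a \<times> 'a, 'a \<times> 'a) chan)" for R2
    using that capacity_region_bc_chan_subset[OF assms] by fastforce
  ultimately show ?thesis
    by blast
qed

end
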